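(* Let $\mathbf{E}\in\mathbb{K}^{m\times\sigma}$ with $\sigma\ge 2$, let $\mathbf{J}\in\mathbb{K}^{\sigma\times\sigma}$ be upper triangular, let $\mathbf{E}^{(1)}$ be the first $\lceil\sigma/2\rceil$ columns of $\mathbf{E}$ and $\mathbf{J}^{(1)}$, $\mathbf{J}^{(2)}$ the leading $\lceil\sigma/2\rceil\times\lceil\sigma/2\rceil$ and trailing $\lfloor\sigma/2\rfloor\times\lfloor\sigma/2\rfloor$ principal submatrices of $\mathbf{J}$. Let $\mathbf{s}\in\mathbb{Z}^m$, let $\mathbf{P}^{(1)}$ be the $\mathbf{s}$-Popov interpolation basis for $(\mathbf{E}^{(1)},\mathbf{J}^{(1)})$ with $\mathbf{s}$-minimal degree $\boldsymbol{\delta}^{(1)}$, let $\mathbf{E}^{(2)}$ be the last $\lfloor\sigma/2\rfloor$ columns of $\mathbf{P}^{(1)}\cdot\mathbf{E}$ (the matrix whose $i$-th row is the $i$-th row of $\mathbf{P}^{(1)}$ applied to $\mathbf{E}$), and let $\mathbf{P}^{(2)}$ be the $(\mathbf{s}+\boldsymbol{\delta}^{(1)})$-Popov interpolation basis for $(\mathbf{E}^{(2)},\mathbf{J}^{(2)})$ with $(\mathbf{s}+\boldsymbol{\delta}^{(1)})$-minimal degree $\boldsymbol{\delta}^{(2)}$. Then $\mathbf{P}^{(2)}\mathbf{P}^{(1)}$ is an $\mathbf{s}$-reduced interpolation basis for $(\mathbf{E},\mathbf{J})$, and the $\mathbf{s}$-minimal degree of $(\mathbf{E},\mathbf{J})$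 is $\boldsymbol{\delta}^{(1)}+\boldsymbol{\delta}^{(2)}$.
   Context: For $p\in\mathbb{K}[X]$ and $\mathbf{e}\in\mathbb{K}^{1\times\sigma}$, $p\cdot\mathbf{e}=\mathbf{e}\,p(\mathbf{J})$; for $\mathbf{p}=(p_1,\dots,p_m)$, $\mathbf{p}\cdot\mathbf{E}=\sum_i p_i\cdot\mathbf{e}_i$ with $\mathbf{e}_i$ the rows of $\mathbf{E}$. An interpolant for $(\mathbf{E},\mathbf{J})$ is $\mathbf{p}$ with $\mathbf{p}\cdot\mathbf{E}=0$; an interpolation basis is a matrix in $\mathbb{K}[X]^{m\times m}$ whose rows form a basis of the (free, rank $m$) module of interpolants. For $\mathbf{s}\in\mathbb{Z}^m$: the $\mathbf{s}$-degree of a nonzero row $[p_j]$ is $\max_j(\deg p_j+s_j)$; the $\mathbf{s}$-leading matrix of a full-rank $\mathbf{P}$ with row $\mathbf{s}$-degrees $d_i$ has $(i,j)$ entry the coefficient of degree $d_i-s_j$ of $p_{ij}$; $\mathbf{P}$ is $\mathbf{s}$-reduced if this matrix has full row rank. The $\mathbf{s}$-pivot index of a row is the largest $j$ attaining its $\mathbf{s}$-degree and $p_j$ its pivot entry. A nonsingular matrix is in $\mathbf{s}$-Popov form if its $\mathbf{s}$-pivot entries are monic and on the diagonal and in each column nonpivot entries have degree less than the pivot entry. The $\mathbf{s}$-Popov interpolation basis is the unique interpolation basis in $\mathbf{s}$-Popov form, and the $\mathbf{s}$-minimal degree is the tuple of degrees of its diagonal entries. *)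

theory Defs
  imports "Jordan_Normal_Form.Determinant" "HOL-Computational_Algebra.Polynomial"
begin

definition poly_at_mat :: "'a::field poly \<Rightarrow> 'a mat \<Rightarrow> 'a mat" where
  "poly_at_mat p J = mat (dim_row J) (dim_col J)
     (\<lambda>(a,b). \<Sum>i\<le>degree p. coeff p i * (J ^\<^sub>m i) $$ (a,b))"

definition act1 :: "'a::field poly \<Rightarrow> 'a vec \<Rightarrow> 'a mat \<Rightarrow> 'a vec" where
  "act1 p e J = vec (dim_col J) (\<lambda>k. \<Sum>l<dim_vec e. e $ l * poly_at_mat p J $$ (l,k))"

definition act :: "'a::field poly vec \<Rightarrow> 'a mat \<Rightarrow> 'a mat \<Rightarrow> 'a vec" where
  "act p E J = vec (dim_col J) (\<lambda>k. \<Sum>i<dim_row E. act1 (p $ i) (row E i) J $ k)"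

definition act_mat :: "'a::field poly mat \<Rightarrow> 'a mat \<Rightarrow> 'a mat \<Rightarrow> 'a mat" where
  "act_mat P E J = mat (dim_row P) (dim_col J) (\<lambda>(i,k). act (row P i) E J $ k)"

definition is_interpolant :: "'a::field mat \<Rightarrow> 'a mat \<Rightarrow> 'a poly vec \<Rightarrow> bool" where
  "is_interpolant E J p \<longleftrightarrow> dim_vec p = dim_row E \<and> act p E J = 0\<^sub>v (dim_col J)"

definition is_interp_basis :: "'a::field mat \<Rightarrow> 'a mat \<Rightarrow> 'a poly mat \<Rightarrow> bool" where
  "is_interp_basis E J P \<longleftrightarrow>
     P \<in> carrier_mat (dim_row E) (dim_row E) \<and>
     (\<forall>i < dim_row P. is_interpolant E J (row P i)) \<and>
     (\<forall>p. is_interpolant E J p \<longrightarrow>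
        (\<exists>c. dim_vec c = dim_row P \<and> p = vec (dim_col P) (\<lambda>j. \<Sum>i<dim_row P. c $ i * P $$ (i,j)))) \<and>
     (\<forall>c. dim_vec c = dim_row P \<longrightarrow>
        vec (dim_col P) (\<lambda>j. \<Sum>i<dim_row P. c $ i * P $$ (i,j)) = 0\<^sub>v (dim_col P) \<longrightarrow> c = 0\<^sub>v (dim_row P))"

definition sdeg :: "int vec \<Rightarrow> 'a::zero poly vec \<Rightarrow> int" where
  "sdeg s r = Max {int (degree (r $ j)) + s $ j | j. j < dim_vec r \<and> r $ j \<noteq> 0}"

definition full_row_rank :: "'a::comm_ring_1 mat \<Rightarrow> bool" where
  "full_row_rank A \<longleftrightarrow> (\<forall>c. dim_vec c = dim_row A \<longrightarrow>
      vec (dim_col A) (\<lambda>j. \<Sum>i<dim_row A. c $ i * A $$ (i,j)) = 0\<^sub>v (dim_col A) \<longrightarrow> c = 0\<^sub>v (dim_row A))"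

definition leading_mat :: "int vec \<Rightarrow> 'a::zero poly mat \<Rightarrow> 'a mat" where
  "leading_mat s P = mat (dim_row P) (dim_col P)
     (\<lambda>(i,j). let e = sdeg s (row P i) - s $ j in if e < 0 then 0 else coeff (P $$ (i,j)) (nat e))"

definition s_reduced :: "int vec \<Rightarrow> 'a::field poly mat \<Rightarrow> bool" where
  "s_reduced s P \<longleftrightarrow> dim_vec s = dim_col P \<and> full_row_rank P \<and> full_row_rank (leading_mat s P)"

definition pivot_index :: "int vec \<Rightarrow> 'a::zero poly vec \<Rightarrow> nat" where
  "pivot_index s r = Max {j. j < dim_vec r \<and> r $ j \<noteq> 0 \<and> int (degree (r $ j)) + s $ j = sdeg s r}"

definition s_popov :: "int vec \<Rightarrow> 'a::field poly mat \<Rightarrow> bool" where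
  "s_popov s P \<longleftrightarrow> (\<exists>m. P \<in> carrier_mat m m \<and> dim_vec s = m \<and> det P \<noteq> 0 \<and>
     (\<forall>i<m. pivot_index s (row P i) = i \<and> lead_coeff (P $$ (i,i)) = 1) \<and>
     (\<forall>i<m. \<forall>j<m. i \<noteq> j \<longrightarrow> P $$ (i,j) = 0 \<or> degree (P $$ (i,j)) < degree (P $$ (j,j))))"

definition popov_interp_basis :: "int vec \<Rightarrow> 'a::field mat \<Rightarrow> 'a mat \<Rightarrow> 'a poly mat" where
  "popov_interp_basis s E J = (THE P. is_interp_basis E J P \<and> s_popov s P)"

definition diag_degrees :: "'a::zero poly mat \<Rightarrow> int vec" where
  "diag_degrees P = vec (dim_row P) (\<lambda>i. int (degree (P $$ (i,i))))"

definition minimal_degree :: "int vec \<Rightarrow> 'a::field mat \<Rightarrow> 'a mat \<Rightarrow> int vec" where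
  "minimal_degree s E J = diag_degrees (popov_interp_basis s E J)"

end

theory Submission
  imports Defs
begin

(*
  Since J is upper triangular, an interpolant for (E, J) is in particular an interpolant for the
  leading block, hence of the form c P1; and because c P1 . E vanishes on the first columns,
  c P1 is an interpolant for (E, J) exactly when c . E2 vanishes under the trailing block, i.e.
  when c is a combination of the rows of P2. So P2 P1 is an interpolation basis.

  For the degrees, work with matrices whose s-pivots lie on the diagonal. The (s + delta1)-pivots of
  P2 are diagonal, so by the predictable degree property of P1 the s-pivots of P2 P1 are diagonal
  as well, monic, of degrees delta1 + delta2. Such a matrix is s-reduced, and reducing the vectors
  X^(delta_i) e_i modulo a basis of this shape produces the s-Popov basis, which therefore has the
  same diagonal degrees; uniqueness of the s-Popov basis identifies it with popov_interp_basis.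
*)

section \<open>Evaluating polynomials at a matrix\<close>

lemma dim_poly_at_mat [simp]:
  "dim_row (poly_at_mat p J) = dim_row J" "dim_col (poly_at_mat p J) = dim_col J"
  by (auto simp: poly_at_mat_def)

lemma poly_at_mat_index:
  assumes "a < dim_row J" "b < dim_col J" "degree p < N"
  shows "poly_at_mat p J $$ (a,b) = (\<Sum>i<N. coeff p i * (J ^\<^sub>m i) $$ (a,b))"
proof -
  have "poly_at_mat p J $$ (a,b) = (\<Sum>i\<le>degree p. coeff p i * (J ^\<^sub>m i) $$ (a,b))"
    using assms by (simp add: poly_at_mat_def)
  also have "\<dots> = (\<Sum>i<N. coeff p i * (J ^\<^sub>m i) $$ (a,b))"
    by (rule sum.mono_neutral_left) (use assms in \<open>auto simp: coeff_eq_0\<close>)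
  finally show ?thesis .
qed

lemma poly_at_mat_0: "poly_at_mat 0 J = 0\<^sub>m (dim_row J) (dim_col J)"
  by (rule eq_matI) (auto simp: poly_at_mat_def)

lemma poly_at_mat_add: "poly_at_mat (p + q) J = poly_at_mat p J + poly_at_mat q J"
proof (rule eq_matI)
  fix a b
  assume ab: "a < dim_row (poly_at_mat p J + poly_at_mat q J)"
    "b < dim_col (poly_at_mat p J + poly_at_mat q J)"
  define N where "N = Suc (degree p + degree q + degree (p + q))"
  have "poly_at_mat (p + q) J $$ (a,b) = (\<Sum>i<N. coeff (p + q) i * (J ^\<^sub>m i) $$ (a,b))"
    using ab by (intro poly_at_mat_index) (auto simp: N_def)
  also have "\<dots> = (\<Sum>i<N. coeff p i * (J ^\<^sub>m i) $$ (a,b)) + (\<Sum>i<N. coeff q i * (J ^\<^sub>m i) $$ (a,b))"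
    by (simp add: distrib_right sum.distrib)
  also have "\<dots> = poly_at_mat p J $$ (a,b) + poly_at_mat q J $$ (a,b)"
    using ab by (simp add: poly_at_mat_index[of a J b p N] poly_at_mat_index[of a J b q N] N_def)
  finally show "poly_at_mat (p + q) J $$ (a,b) = (poly_at_mat p J + poly_at_mat q J) $$ (a,b)"
    using ab by simp
qed auto

lemma poly_at_mat_diff_index:
  assumes "l < dim_row J" "k < dim_col J"
  shows "poly_at_mat (p - q) J $$ (l,k) = poly_at_mat p J $$ (l,k) - poly_at_mat q J $$ (l,k)"
  using assms poly_at_mat_add[of "p - q" q J] by simp

lemma poly_at_mat_sum_index:
  assumes "finite A" "l < dim_row J" "k < dim_col J"
  shows "poly_at_mat (\<Sum>i\<in>A. f i) J $$ (l,k) = (\<Sum>i\<in>A. poly_at_mat (f i) J $$ (l,k))"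
  using assms by (induction A rule: finite_induct) (auto simp: poly_at_mat_0 poly_at_mat_add)

lemma poly_at_mat_smult: "poly_at_mat (smult c p) J = c \<cdot>\<^sub>m poly_at_mat p J"
proof (rule eq_matI)
  fix a b
  assume ab: "a < dim_row (c \<cdot>\<^sub>m poly_at_mat p J)" "b < dim_col (c \<cdot>\<^sub>m poly_at_mat p J)"
  define N where "N = Suc (degree p + degree (smult c p))"
  have "poly_at_mat (smult c p) J $$ (a,b) = (\<Sum>i<N. coeff (smult c p) i * (J ^\<^sub>m i) $$ (a,b))"
    using ab by (intro poly_at_mat_index) (auto simp: N_def)
  also have "\<dots> = c * (\<Sum>i<N. coeff p i * (J ^\<^sub>m i) $$ (a,b))"
    by (simp add: sum_distrib_left mult.assoc)
  also have "\<dots> = c * poly_at_mat p J $$ (a,b)"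
    using ab by (simp add: poly_at_mat_index[of a J b p N] N_def)
  finally show "poly_at_mat (smult c p) J $$ (a,b) = (c \<cdot>\<^sub>m poly_at_mat p J) $$ (a,b)"
    using ab by simp
qed auto

lemma poly_at_mat_pCons:
  assumes J: "J \<in> carrier_mat n n"
  shows "poly_at_mat (pCons c p) J = c \<cdot>\<^sub>m 1\<^sub>m n + poly_at_mat p J * J"
proof (rule eq_matI)
  fix a b
  assume "a < dim_row (c \<cdot>\<^sub>m 1\<^sub>m n + poly_at_mat p J * J)"
    "b < dim_col (c \<cdot>\<^sub>m 1\<^sub>m n + poly_at_mat p J * J)"
  hence a: "a < n" and b: "b < n" using J by auto
  define N where "N = Suc (degree p)"
  have "degree (pCons c p) < Suc N" unfolding N_def using degree_pCons_le[of c p] by linarith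
  then have "poly_at_mat (pCons c p) J $$ (a,b) = (\<Sum>i<Suc N. coeff (pCons c p) i * (J ^\<^sub>m i) $$ (a,b))"
    using a b J by (intro poly_at_mat_index) auto
  also have "\<dots> = c * 1\<^sub>m n $$ (a,b) + (\<Sum>i<N. coeff p i * (J ^\<^sub>m i * J) $$ (a,b))"
    unfolding sum.lessThan_Suc_shift using J by simp
  also have "(\<Sum>i<N. coeff p i * (J ^\<^sub>m i * J) $$ (a,b))
      = (\<Sum>i<N. \<Sum>r<n. coeff p i * ((J ^\<^sub>m i) $$ (a,r) * J $$ (r,b)))"
    using J a b by (auto simp: scalar_prod_def sum_distrib_left atLeast0LessThan intro!: sum.cong)
  also have "\<dots> = (\<Sum>r<n. (\<Sum>i<N. coeff p i * (J ^\<^sub>m i) $$ (a,r)) * J $$ (r,b))"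
    by (subst sum.swap) (simp add: sum_distrib_right mult.assoc)
  also have "\<dots> = (\<Sum>r<n. poly_at_mat p J $$ (a,r) * J $$ (r,b))"
    using J a by (intro sum.cong refl) (subst poly_at_mat_index[of _ _ _ _ N], auto simp: N_def)
  also have "\<dots> = (poly_at_mat p J * J) $$ (a,b)"
    using J a b by (simp add: scalar_prod_def atLeast0LessThan)
  finally show "poly_at_mat (pCons c p) J $$ (a,b) = (c \<cdot>\<^sub>m 1\<^sub>m n + poly_at_mat p J * J) $$ (a,b)"
    using a b J by simp
qed (use J in auto)

lemma poly_at_mat_mult:
  assumes J: "J \<in> carrier_mat n n"
  shows "poly_at_mat (p * q) J = poly_at_mat p J * poly_at_mat q J"
proof (induction q rule: pCons_induct)
  case 0
  then show ?case using J by (auto simp: poly_at_mat_0)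
next
  case (pCons c q)
  let ?p = "poly_at_mat p J" and ?q = "poly_at_mat q J"
  have carr: "?p \<in> carrier_mat n n" "?q \<in> carrier_mat n n" "c \<cdot>\<^sub>m 1\<^sub>m n \<in> carrier_mat n n"
    "?q * J \<in> carrier_mat n n"
    using J by auto
  have "(0::'a) \<cdot>\<^sub>m 1\<^sub>m n = 0\<^sub>m n n"
    by (rule eq_matI) auto
  then have "poly_at_mat (p * pCons c q) J = c \<cdot>\<^sub>m ?p + ?p * ?q * J"
    using carr J by (simp add: poly_at_mat_add poly_at_mat_smult poly_at_mat_pCons pCons.IH)
  also have "\<dots> = ?p * (c \<cdot>\<^sub>m 1\<^sub>m n) + ?p * (?q * J)"
    using carr J mult_smult_distrib[OF carr(1) one_carrier_mat, of c]
    by (simp add: assoc_mult_mat[of _ n n _ n _ n])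
  also have "\<dots> = ?p * poly_at_mat (pCons c q) J"
    using mult_add_distrib_mat[OF carr(1) carr(3) carr(4)] by (simp add: poly_at_mat_pCons[OF J])
  finally show ?case .
qed

lemma poly_at_mat_mult_index:
  assumes J: "J \<in> carrier_mat n n" and "l < n" "k < n"
  shows "poly_at_mat (p * q) J $$ (l,k) = (\<Sum>r<n. poly_at_mat p J $$ (l,r) * poly_at_mat q J $$ (r,k))"
  using assms by (simp add: poly_at_mat_mult[OF J] scalar_prod_def atLeast0LessThan)

section \<open>The action of polynomial vectors\<close>

definition row_comb :: "'b::comm_semiring_0 vec \<Rightarrow> 'b mat \<Rightarrow> 'b vec" where
  "row_comb c P = vec (dim_col P) (\<lambda>j. \<Sum>i<dim_row P. c $ i * P $$ (i,j))"

lemma dim_row_comb [simp]: "dim_vec (row_comb c P) = dim_col P"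
  by (simp add: row_comb_def)

lemma row_comb_index: "j < dim_col P \<Longrightarrow> row_comb c P $ j = (\<Sum>i<dim_row P. c $ i * P $$ (i,j))"
  by (simp add: row_comb_def)

lemma row_comb_zero: "row_comb (0\<^sub>v (dim_row P)) P = 0\<^sub>v (dim_col P)"
  by (rule eq_vecI) (auto simp: row_comb_def)

lemma row_comb_add:
  "dim_vec c = dim_row P \<Longrightarrow> dim_vec d = dim_row P \<Longrightarrow> row_comb (c + d) P = row_comb c P + row_comb d P"
  by (rule eq_vecI) (auto simp: row_comb_def distrib_right sum.distrib)

lemma row_comb_unit_index:
  assumes "i0 < dim_row P" "j < dim_col P"
  shows "row_comb (vec (dim_row P) (\<lambda>i. if i = i0 then x else 0)) P $ j = x * P $$ (i0,j)"
proof -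
  have "row_comb (vec (dim_row P) (\<lambda>i. if i = i0 then x else 0)) P $ j
      = (\<Sum>i<dim_row P. (if i = i0 then x else 0) * P $$ (i,j))"
    using assms unfolding row_comb_def by simp
  also have "\<dots> = (\<Sum>i<dim_row P. if i = i0 then x * P $$ (i,j) else 0)"
    by (rule sum.cong) auto
  finally show ?thesis using assms by simp
qed

lemma row_mult_eq_row_comb:
  assumes "A \<in> carrier_mat m n" "B \<in> carrier_mat n k" "i < m"
  shows "row (A * B) i = row_comb (row A i) B"
  using assms by (intro eq_vecI) (auto simp: row_comb_def scalar_prod_def atLeast0LessThan)

lemma row_comb_mult:
  assumes A: "A \<in> carrier_mat m m" and B: "B \<in> carrier_mat m m" and d: "dim_vec d = m"
  shows "row_comb d (A * B) = row_comb (row_comb d A) B"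
proof (rule eq_vecI)
  fix j assume "j < dim_vec (row_comb (row_comb d A) B)"
  then have j: "j < m" using B by simp
  have "row_comb d (A * B) $ j = (\<Sum>i<m. d $ i * (\<Sum>k<m. A $$ (i,k) * B $$ (k,j)))"
    using A B j by (simp add: row_comb_def scalar_prod_def atLeast0LessThan)
  also have "\<dots> = (\<Sum>k<m. (\<Sum>i<m. d $ i * A $$ (i,k)) * B $$ (k,j))"
    by (simp add: sum_distrib_left sum_distrib_right mult.assoc) (rule sum.swap)
  also have "\<dots> = row_comb (row_comb d A) B $ j"
    using A B j by (simp add: row_comb_def)
  finally show "row_comb d (A * B) $ j = row_comb (row_comb d A) B $ j" .
qed (use A B in simp)

lemma is_interp_basis_iff:
  "is_interp_basis E J P \<longleftrightarrow> P \<in> carrier_mat (dim_row E) (dim_row E) \<and>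
     (\<forall>i < dim_row P. is_interpolant E J (row P i)) \<and>
     (\<forall>p. is_interpolant E J p \<longrightarrow> (\<exists>c. dim_vec c = dim_row P \<and> p = row_comb c P)) \<and>
     (\<forall>c. dim_vec c = dim_row P \<longrightarrow> row_comb c P = 0\<^sub>v (dim_col P) \<longrightarrow> c = 0\<^sub>v (dim_row P))"
  unfolding is_interp_basis_def row_comb_def by simp

lemma act_index:
  "k < dim_col J \<Longrightarrow>
    act p E J $ k = (\<Sum>i<dim_row E. \<Sum>l<dim_col E. E $$ (i,l) * poly_at_mat (p $ i) J $$ (l,k))"
  by (simp add: act_def act1_def)

lemma dim_act [simp]: "dim_vec (act p E J) = dim_col J"
  by (simp add: act_def)

lemma dim_act_mat [simp]: "dim_row (act_mat P E J) = dim_row P" "dim_col (act_mat P E J) = dim_col J"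
  by (auto simp: act_mat_def)

lemma act_row_comb:
  assumes J: "J \<in> carrier_mat n n" and E: "dim_col E = n" and P: "dim_col P = dim_row E"
  shows "act (row_comb c P) E J = act c (act_mat P E J) J"
proof (rule eq_vecI)
  fix k assume "k < dim_vec (act c (act_mat P E J) J)"
  hence k: "k < n" using J by simp
  let ?m = "dim_row P" and ?e = "dim_row E"
  define T where "T j l i r = E $$ (j,l) * (poly_at_mat (P $$ (i,j)) J $$ (l,r) * poly_at_mat (c $ i) J $$ (r,k))"
    for j l i r
  have "act (row_comb c P) E J $ k = (\<Sum>j<?e. \<Sum>l<n. E $$ (j,l) * poly_at_mat (\<Sum>i<?m. P $$ (i,j) * c $ i) J $$ (l,k))"
    using k J E P by (simp add: act_index row_comb_def mult.commute)
  also have "\<dots> = (\<Sum>j<?e. \<Sum>l<n. \<Sum>i<?m. \<Sum>r<n. T j l i r)"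
    using k J by (simp add: T_def poly_at_mat_sum_index poly_at_mat_mult_index[OF J] sum_distrib_left)
  also have "\<dots> = (\<Sum>i<?m. \<Sum>r<n. \<Sum>j<?e. \<Sum>l<n. T j l i r)"
  proof -
    have "(\<Sum>j<?e. \<Sum>l<n. \<Sum>i<?m. \<Sum>r<n. T j l i r) = (\<Sum>j<?e. \<Sum>i<?m. \<Sum>l<n. \<Sum>r<n. T j l i r)"
      by (rule sum.cong[OF refl], rule sum.swap)
    also have "\<dots> = (\<Sum>i<?m. \<Sum>j<?e. \<Sum>r<n. \<Sum>l<n. T j l i r)"
      by (subst sum.swap) (rule sum.cong[OF refl], rule sum.cong[OF refl], rule sum.swap)
    also have "\<dots> = (\<Sum>i<?m. \<Sum>r<n. \<Sum>j<?e. \<Sum>l<n. T j l i r)"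
      by (rule sum.cong[OF refl], rule sum.swap)
    finally show ?thesis .
  qed
  also have "\<dots> = act c (act_mat P E J) J $ k"
    using k J E P
    by (simp add: T_def act_index act_mat_def sum_distrib_left sum_distrib_right mult.assoc)
  finally show "act (row_comb c P) E J $ k = act c (act_mat P E J) J $ k" .
qed simp

lemma is_interpolant_row_comb:
  assumes J: "J \<in> carrier_mat n n" and E: "dim_col E = n" and P: "dim_col P = dim_row E"
    and rows: "\<And>i. i < dim_row P \<Longrightarrow> is_interpolant E J (row P i)"
    and c: "dim_vec c = dim_row P"
  shows "is_interpolant E J (row_comb c P)"
proof -
  have "act_mat P E J $$ (i,l) = 0" if "i < dim_row P" "l < dim_col J" for i l
    using rows[of i] that by (auto simp: act_mat_def is_interpolant_def)
  then have "act c (act_mat P E J) J = 0\<^sub>v (dim_col J)"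
    by (intro eq_vecI) (auto simp: act_index)
  then show ?thesis using P act_row_comb[OF J E P] by (simp add: is_interpolant_def)
qed

lemma is_interpolant_diff:
  assumes J: "J \<in> carrier_mat n n" and E: "dim_col E = n"
    and p: "is_interpolant E J p" and q: "is_interpolant E J q"
  shows "is_interpolant E J (p - q)"
proof -
  have d: "dim_vec p = dim_row E" "dim_vec q = dim_row E"
    using p q by (auto simp: is_interpolant_def)
  have "act (p - q) E J $ k = act p E J $ k - act q E J $ k" if "k < dim_col J" for k
    using that d J E
    by (simp add: act_index poly_at_mat_diff_index algebra_simps sum_subtractf)
  then have "act (p - q) E J = 0\<^sub>v (dim_col J)"
    using p q by (intro eq_vecI) (auto simp: is_interpolant_def)
  then show ?thesis using d by (simp add: is_interpolant_def)
qed


section \<open>Splitting an upper triangular matrix into diagonal blocks\<close>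

definition lead_block :: "nat \<Rightarrow> 'b mat \<Rightarrow> 'b mat" where
  "lead_block h J = mat h h (\<lambda>(i,j). J $$ (i,j))"

definition trail_block :: "nat \<Rightarrow> nat \<Rightarrow> 'b mat \<Rightarrow> 'b mat" where
  "trail_block h1 h2 J = mat h2 h2 (\<lambda>(i,j). J $$ (h1 + i, h1 + j))"

definition left_cols :: "nat \<Rightarrow> 'b mat \<Rightarrow> 'b mat" where
  "left_cols h G = mat (dim_row G) h (\<lambda>(i,j). G $$ (i,j))"

definition right_cols :: "nat \<Rightarrow> nat \<Rightarrow> 'b mat \<Rightarrow> 'b mat" where
  "right_cols h1 h2 G = mat (dim_row G) h2 (\<lambda>(i,j). G $$ (i, h1 + j))"

lemma lead_block_carrier: "lead_block h J \<in> carrier_mat h h"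
  and trail_block_carrier: "trail_block h1 h2 J \<in> carrier_mat h2 h2"
  and dim_left_cols [simp]: "dim_row (left_cols h G) = dim_row G" "dim_col (left_cols h G) = h"
  and dim_right_cols [simp]: "dim_row (right_cols h1 h2 G) = dim_row G" "dim_col (right_cols h1 h2 G) = h2"
  by (auto simp: lead_block_def trail_block_def left_cols_def right_cols_def)

lemma sum_lessThan_add_split: "(\<Sum>r<a + (b::nat). f r) = (\<Sum>r<a. f r) + (\<Sum>r<b. f (a + r))"
  by (induction b) (auto simp: add.assoc)

context
  fixes J :: "'b::field mat" and h1 h2 \<sigma> :: nat
  assumes J: "J \<in> carrier_mat \<sigma> \<sigma>" and upper: "upper_triangular J" and split: "h1 + h2 = \<sigma>"
begin

lemma upper_triangular_power_entry: "y < x \<Longrightarrow> x < \<sigma> \<Longrightarrow> (J ^\<^sub>m i) $$ (x,y) = 0"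
proof (induction i arbitrary: x y)
  case 0
  then show ?case using J by simp
next
  case (Suc i)
  have "(J ^\<^sub>m Suc i) $$ (x,y) = (\<Sum>r<\<sigma>. (J ^\<^sub>m i) $$ (x,r) * J $$ (r,y))"
    using Suc.prems J by (simp add: scalar_prod_def atLeast0LessThan)
  also have "\<dots> = 0"
  proof (rule sum.neutral, intro ballI)
    fix r assume r: "r \<in> {..<\<sigma>}"
    show "(J ^\<^sub>m i) $$ (x,r) * J $$ (r,y) = 0"
    proof (cases "r < x")
      case True
      then show ?thesis using Suc r by simp
    next
      case False
      then show ?thesis using Suc r upper J by (auto simp: upper_triangular_def)
    qed
  qed
  finally show ?case .
qed

lemma power_lead_block_entry:
  "x < h1 \<Longrightarrow> y < h1 \<Longrightarrow> (J ^\<^sub>m i) $$ (x,y) = (lead_block h1 J ^\<^sub>m i) $$ (x,y)"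
proof (induction i arbitrary: x y)
  case 0
  then show ?case using J split lead_block_carrier[of h1 J] by simp
next
  case (Suc i)
  have "(J ^\<^sub>m Suc i) $$ (x,y) = (\<Sum>r<\<sigma>. (J ^\<^sub>m i) $$ (x,r) * J $$ (r,y))"
    using Suc.prems J split by (simp add: scalar_prod_def atLeast0LessThan)
  also have "\<dots> = (\<Sum>r<h1. (J ^\<^sub>m i) $$ (x,r) * J $$ (r,y))"
    using Suc.prems split upper J
    by (auto simp flip: split simp: sum_lessThan_add_split upper_triangular_def)
  also have "\<dots> = (\<Sum>r<h1. (lead_block h1 J ^\<^sub>m i) $$ (x,r) * lead_block h1 J $$ (r,y))"
    using Suc by (intro sum.cong refl) (simp add: lead_block_def)
  also have "\<dots> = (lead_block h1 J ^\<^sub>m Suc i) $$ (x,y)"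
    using Suc.prems lead_block_carrier[of h1 J] by (simp add: scalar_prod_def atLeast0LessThan)
  finally show ?case .
qed

lemma power_trail_block_entry:
  "x < h2 \<Longrightarrow> y < h2 \<Longrightarrow> (J ^\<^sub>m i) $$ (h1 + x, h1 + y) = (trail_block h1 h2 J ^\<^sub>m i) $$ (x,y)"
proof (induction i arbitrary: x y)
  case 0
  then show ?case using J split trail_block_carrier[of h1 h2 J] by simp
next
  case (Suc i)
  have "(J ^\<^sub>m Suc i) $$ (h1 + x, h1 + y) = (\<Sum>r<\<sigma>. (J ^\<^sub>m i) $$ (h1 + x, r) * J $$ (r, h1 + y))"
    using Suc.prems J split by (simp add: scalar_prod_def atLeast0LessThan)
  also have "\<dots> = (\<Sum>r<h2. (J ^\<^sub>m i) $$ (h1 + x, h1 + r) * J $$ (h1 + r, h1 + y))"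
    using Suc.prems split by (auto simp flip: split simp: sum_lessThan_add_split upper_triangular_power_entry)
  also have "\<dots> = (\<Sum>r<h2. (trail_block h1 h2 J ^\<^sub>m i) $$ (x,r) * trail_block h1 h2 J $$ (r,y))"
    using Suc by (intro sum.cong refl) (simp add: trail_block_def)
  also have "\<dots> = (trail_block h1 h2 J ^\<^sub>m Suc i) $$ (x,y)"
    using Suc.prems trail_block_carrier[of h1 h2 J] by (simp add: scalar_prod_def atLeast0LessThan)
  finally show ?case .
qed

lemma poly_at_mat_upper_triangular_entry: "y < x \<Longrightarrow> x < \<sigma> \<Longrightarrow> poly_at_mat p J $$ (x,y) = 0"
  using J by (subst poly_at_mat_index[of _ _ _ _ "Suc (degree p)"]) (auto simp: upper_triangular_power_entry)

lemma poly_at_mat_lead_block_entry: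
  "x < h1 \<Longrightarrow> y < h1 \<Longrightarrow> poly_at_mat p J $$ (x,y) = poly_at_mat p (lead_block h1 J) $$ (x,y)"
  using J split lead_block_carrier[of h1 J]
  by (simp add: poly_at_mat_index[of _ _ _ _ "Suc (degree p)"] power_lead_block_entry)

lemma poly_at_mat_trail_block_entry:
  "x < h2 \<Longrightarrow> y < h2 \<Longrightarrow>
    poly_at_mat p J $$ (h1 + x, h1 + y) = poly_at_mat p (trail_block h1 h2 J) $$ (x,y)"
  using J split trail_block_carrier[of h1 h2 J]
  by (simp add: poly_at_mat_index[of _ _ _ _ "Suc (degree p)"] power_trail_block_entry)

lemma act_left_cols:
  assumes G: "dim_col G = \<sigma>" and k: "k < h1"
  shows "act c G J $ k = act c (left_cols h1 G) (lead_block h1 J) $ k"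
proof -
  have "act c G J $ k = (\<Sum>i<dim_row G. \<Sum>l<\<sigma>. G $$ (i,l) * poly_at_mat (c $ i) J $$ (l,k))"
    using k split J G by (simp add: act_index)
  also have "\<dots> = (\<Sum>i<dim_row G. \<Sum>l<h1. G $$ (i,l) * poly_at_mat (c $ i) (lead_block h1 J) $$ (l,k))"
    using k split
    by (auto simp flip: split simp: sum_lessThan_add_split poly_at_mat_upper_triangular_entry
        poly_at_mat_lead_block_entry intro!: sum.cong)
  also have "\<dots> = act c (left_cols h1 G) (lead_block h1 J) $ k"
    using k lead_block_carrier[of h1 J] by (simp add: act_index left_cols_def)
  finally show ?thesis .
qed

lemma act_right_cols:
  assumes G: "dim_col G = \<sigma>" and k: "k < h2"
    and left0: "\<And>i l. i < dim_row G \<Longrightarrow> l < h1 \<Longrightarrow> G $$ (i,l) = 0"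
  shows "act c G J $ (h1 + k) = act c (right_cols h1 h2 G) (trail_block h1 h2 J) $ k"
proof -
  have "act c G J $ (h1 + k) = (\<Sum>i<dim_row G. \<Sum>l<\<sigma>. G $$ (i,l) * poly_at_mat (c $ i) J $$ (l, h1 + k))"
    using k split J G by (simp add: act_index)
  also have "\<dots> = (\<Sum>i<dim_row G. \<Sum>l<h2. G $$ (i, h1 + l) * poly_at_mat (c $ i) (trail_block h1 h2 J) $$ (l,k))"
    using k split left0
    by (auto simp flip: split simp: sum_lessThan_add_split poly_at_mat_trail_block_entry intro!: sum.cong)
  also have "\<dots> = act c (right_cols h1 h2 G) (trail_block h1 h2 J) $ k"
    using k trail_block_carrier[of h1 h2 J] by (simp add: act_index right_cols_def)
  finally show ?thesis .
qed

lemma act_eq_0_iff_right_cols: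
  assumes G: "dim_col G = \<sigma>" and left0: "\<And>i l. i < dim_row G \<Longrightarrow> l < h1 \<Longrightarrow> G $$ (i,l) = 0"
  shows "act c G J = 0\<^sub>v \<sigma> \<longleftrightarrow> act c (right_cols h1 h2 G) (trail_block h1 h2 J) = 0\<^sub>v h2"
proof -
  have low: "act c G J $ k = 0" if "k < h1" for k
    using act_left_cols[OF G that] left0 that lead_block_carrier[of h1 J]
    by (simp add: act_index left_cols_def)
  have high: "act c G J $ (h1 + k) = act c (right_cols h1 h2 G) (trail_block h1 h2 J) $ k"
    if "k < h2" for k
    by (rule act_right_cols[OF G that left0])
  have all: "(\<forall>k<\<sigma>. P k) \<longleftrightarrow> (\<forall>k<h1. P k) \<and> (\<forall>k<h2. P (h1 + k))" for P
    by (metis split add_less_cancel_left le_Suc_ex not_less trans_less_add1)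
  show ?thesis
    using J trail_block_carrier[of h1 h2 J] low high
    by (auto simp: vec_eq_iff all)
qed


lemma is_interpolant_left_cols:
  assumes E: "dim_col E = \<sigma>" and p: "is_interpolant E J p"
  shows "is_interpolant (left_cols h1 E) (lead_block h1 J) p"
proof -
  have "act p (left_cols h1 E) (lead_block h1 J) $ k = 0" if "k < h1" for k
    using act_left_cols[OF E that, of p] p that split J by (simp add: is_interpolant_def)
  then show ?thesis
    using p lead_block_carrier[of h1 J] by (auto simp: is_interpolant_def vec_eq_iff)
qed

lemma act_mat_left_cols_zero:
  assumes E: "dim_col E = \<sigma>"
    and rows: "\<And>i. i < dim_row P \<Longrightarrow> is_interpolant (left_cols h1 E) (lead_block h1 J) (row P i)"
    and "i < dim_row P" "l < h1"
  shows "act_mat P E J $$ (i,l) = 0"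
  using assms act_left_cols[OF E \<open>l < h1\<close>, of "row P i"] split J lead_block_carrier[of h1 J]
  by (simp add: act_mat_def is_interpolant_def)

lemma interp_basis_mult:
  assumes E: "dim_col E = \<sigma>"
    and P1: "is_interp_basis (left_cols h1 E) (lead_block h1 J) P1"
    and P2: "is_interp_basis (right_cols h1 h2 (act_mat P1 E J)) (trail_block h1 h2 J) P2"
  shows "is_interp_basis E J (P2 * P1)"
proof -
  define m where "m = dim_row E"
  define F where "F = act_mat P1 E J"
  have P1c: "P1 \<in> carrier_mat m m" and P2c: "P2 \<in> carrier_mat m m"
    using P1 P2 by (auto simp: is_interp_basis_iff m_def F_def)
  have Fc: "dim_row F = m" "dim_col F = \<sigma>" using P1c J by (auto simp: F_def)
  have rows1: "\<And>i. i < dim_row P1 \<Longrightarrow> is_interpolant (left_cols h1 E) (lead_block h1 J) (row P1 i)"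
    using P1 by (simp add: is_interp_basis_iff)
  have residual: "act (row_comb c P1) E J = act c F J" for c
    unfolding F_def using P1c by (intro act_row_comb[OF J(1) E]) (simp add: m_def)
  have F_left: "F $$ (i,l) = 0" if "i < dim_row F" "l < h1" for i l
    using act_mat_left_cols_zero[OF E rows1, of i l] that P1c Fc by (simp add: F_def)
  have key: "act c F J = 0\<^sub>v \<sigma> \<longleftrightarrow>
      is_interpolant (right_cols h1 h2 F) (trail_block h1 h2 J) c" if "dim_vec c = m" for c
    using act_eq_0_iff_right_cols[OF Fc(2) F_left, of c] that Fc trail_block_carrier[of h1 h2 J]
    by (simp add: is_interpolant_def)
  show ?thesis
    unfolding is_interp_basis_iff
  proof (intro conjI allI impI)
    show "P2 * P1 \<in> carrier_mat (dim_row E) (dim_row E)" using P1c P2c by (simp add: m_def)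
  next
    fix i assume "i < dim_row (P2 * P1)"
    then have i: "i < m" using P2c by simp
    have "is_interpolant (right_cols h1 h2 F) (trail_block h1 h2 J) (row P2 i)"
      using P2 P2c i by (simp add: is_interp_basis_iff F_def)
    then have "act (row P2 i) F J = 0\<^sub>v \<sigma>" using key[of "row P2 i"] P2c by simp
    then show "is_interpolant E J (row (P2 * P1) i)"
      using row_mult_eq_row_comb[OF P2c P1c i] residual P1c J by (simp add: is_interpolant_def m_def)
  next
    fix p assume p: "is_interpolant E J p"
    obtain c where c: "dim_vec c = m" "p = row_comb c P1"
      using P1 is_interpolant_left_cols[OF E p] P1c by (auto simp: is_interp_basis_iff)
    then have "act c F J = 0\<^sub>v \<sigma>" using p residual J by (simp add: is_interpolant_def)
    then obtain d where d: "dim_vec d = m" "c = row_comb d P2"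
      using key[OF c(1)] P2 P2c by (auto simp: is_interp_basis_iff F_def)
    then have "p = row_comb d (P2 * P1)" using c row_comb_mult[OF P2c P1c d(1)] by simp
    then show "\<exists>c. dim_vec c = dim_row (P2 * P1) \<and> p = row_comb c (P2 * P1)" using d P2c by auto
  next
    fix c assume c: "dim_vec c = dim_row (P2 * P1)" "row_comb c (P2 * P1) = 0\<^sub>v (dim_col (P2 * P1))"
    then have "row_comb (row_comb c P2) P1 = 0\<^sub>v (dim_col P1)"
      using row_comb_mult[OF P2c P1c] P2c by simp
    then have "row_comb c P2 = 0\<^sub>v m" using P1 P1c P2c by (simp add: is_interp_basis_iff)
    then show "c = 0\<^sub>v (dim_row (P2 * P1))" using P2 P2c c by (simp add: is_interp_basis_iff)
  qed
qed

end

definition poly_deg_le :: "'b::zero poly \<Rightarrow> int \<Rightarrow> bool" where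
  "poly_deg_le q B \<longleftrightarrow> q = 0 \<or> int (degree q) \<le> B"

lemma poly_deg_le_0 [simp]: "poly_deg_le 0 B"
  by (simp add: poly_deg_le_def)

lemma poly_deg_le_degree: "poly_deg_le q (int (degree q))"
  by (simp add: poly_deg_le_def)

lemma poly_deg_le_mono: "poly_deg_le q A \<Longrightarrow> A \<le> B \<Longrightarrow> poly_deg_le q B"
  by (auto simp: poly_deg_le_def)

lemma poly_deg_le_uminus [simp]: "poly_deg_le (- (p::'b::comm_ring_1 poly)) B = poly_deg_le p B"
  by (simp add: poly_deg_le_def)

lemma poly_deg_le_add:
  fixes p q :: "'b::comm_ring_1 poly"
  assumes p: "poly_deg_le p B" and q: "poly_deg_le q B"
  shows "poly_deg_le (p + q) B"
proof (cases "p + q = 0")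
  case False
  then have "p \<noteq> 0 \<or> q \<noteq> 0" by auto
  then show ?thesis
    using p q degree_add_le_max[of p q] by (auto simp: poly_deg_le_def)
qed simp

lemma poly_deg_le_diff:
  fixes p q :: "'b::comm_ring_1 poly"
  shows "poly_deg_le p B \<Longrightarrow> poly_deg_le q B \<Longrightarrow> poly_deg_le (p - q) B"
  using poly_deg_le_add[of p B "- q"] by simp

lemma poly_deg_le_sum:
  "(\<And>i. i \<in> A \<Longrightarrow> poly_deg_le (f i :: 'b::comm_ring_1 poly) B) \<Longrightarrow> poly_deg_le (\<Sum>i\<in>A. f i) B"
  by (induction A rule: infinite_finite_induct) (auto intro: poly_deg_le_add)

lemma poly_deg_le_mult:
  fixes p q :: "'b::comm_ring_1 poly"
  assumes "poly_deg_le p A" "poly_deg_le q B"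
  shows "poly_deg_le (p * q) (A + B)"
proof (cases "p = 0 \<or> q = 0")
  case False
  then show ?thesis using assms degree_mult_le[of p q] by (auto simp: poly_deg_le_def)
qed auto

lemma poly_deg_le_prod:
  "finite A \<Longrightarrow> (\<And>i. i \<in> A \<Longrightarrow> poly_deg_le (f i :: 'b::comm_ring_1 poly) (b i)) \<Longrightarrow>
    poly_deg_le (\<Prod>i\<in>A. f i) (\<Sum>i\<in>A. b i)"
proof (induction A rule: finite_induct)
  case (insert x F)
  then show ?case
    using poly_deg_le_mult[of "f x" "b x" "\<Prod>i\<in>F. f i" "\<Sum>i\<in>F. b i"] by simp
qed (simp add: poly_deg_le_def)

lemma add_lower_degree:
  fixes q r :: "'b::comm_ring_1 poly"
  assumes "q \<noteq> 0" "poly_deg_le r (int (degree q) - 1)"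
  shows "q + r \<noteq> 0" "degree (q + r) = degree q" "lead_coeff (q + r) = lead_coeff q"
proof -
  have "degree (q + r) = degree q \<and> lead_coeff (q + r) = lead_coeff q"
  proof (cases "r = 0")
    case False
    then have lt: "degree r < degree q" using assms by (auto simp: poly_deg_le_def)
    then have "degree (q + r) = degree q" by (rule degree_add_eq_left)
    then show ?thesis using lt by (simp add: coeff_eq_0)
  qed simp
  then show "degree (q + r) = degree q" and lc: "lead_coeff (q + r) = lead_coeff q" by blast+
  show "q + r \<noteq> 0"
  proof
    assume "q + r = 0"
    then have "lead_coeff q = 0" using lc by simp
    then show False using assms(1) by simp
  qed
qed

lemma poly_deg_le_diff_same_lead:
  fixes q r :: "'b::comm_ring_1 poly"
  assumes "degree r = degree q" "lead_coeff r = lead_coeff q"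
  shows "poly_deg_le (q - r) (int (degree q) - 1)"
proof (cases "q - r = 0")
  case False
  have "degree (q - r) \<le> degree q" using degree_diff_le[of q "degree q" r] assms by simp
  moreover have "coeff (q - r) (degree q) = 0" using assms by simp
  then have "degree (q - r) \<noteq> degree q" using False leading_coeff_0_iff by metis
  ultimately show ?thesis using False by (auto simp: poly_deg_le_def)
qed simp

lemma obtain_last_maximizer:
  fixes f :: "nat \<Rightarrow> 'b::linorder"
  assumes "finite S" "S \<noteq> {}"
  obtains k where "k \<in> S" "\<And>l. l \<in> S \<Longrightarrow> f l \<le> f k" "\<And>l. l \<in> S \<Longrightarrow> k < l \<Longrightarrow> f l < f k"
proof -
  define T where "T = {l\<in>S. f l = Max (f ` S)}"
  have max: "Max (f ` S) \<in> f ` S" "\<And>l. l \<in> S \<Longrightarrow> f l \<le> Max (f ` S)"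
    using assms by auto
  have T: "finite T" "T \<noteq> {}"
    using assms(1) max(1) unfolding T_def by auto
  show ?thesis
  proof
    show "Max T \<in> S" using T Max_in[OF T] by (simp add: T_def)
    show "f l \<le> f (Max T)" if "l \<in> S" for l
      using Max_in[OF T] max(2)[OF that] by (simp add: T_def)
    show "f l < f (Max T)" if "l \<in> S" "Max T < l" for l
    proof -
      have "l \<notin> T" using that Max_ge[OF T(1), of l] by auto
      then show ?thesis using that(1) max(2)[OF that(1)] Max_in[OF T] by (auto simp: T_def)
    qed
  qed
qed

section \<open>Matrices with their pivots on the diagonal\<close>

definition is_pivot :: "int vec \<Rightarrow> 'b::zero poly vec \<Rightarrow> nat \<Rightarrow> bool" where
  "is_pivot s r i \<longleftrightarrow> i < dim_vec r \<and> r $ i \<noteq> 0 \<and>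
    (\<forall>j<dim_vec r. r $ j \<noteq> 0 \<longrightarrow> int (degree (r $ j)) + s $ j \<le> int (degree (r $ i)) + s $ i) \<and>
    (\<forall>j<dim_vec r. i < j \<longrightarrow> r $ j \<noteq> 0 \<longrightarrow> int (degree (r $ j)) + s $ j < int (degree (r $ i)) + s $ i)"

text \<open>In the paper's terms: the \<open>s\<close>-pivot of row \<open>i\<close> is in column \<open>i\<close>, i.e. the \<open>s\<close>-Popov
  form without monicity and without the degree condition on the columns.\<close>

definition diag_weak_popov :: "int vec \<Rightarrow> 'b::zero poly mat \<Rightarrow> bool" where
  "diag_weak_popov s P \<longleftrightarrow> (\<forall>i<dim_row P. is_pivot s (row P i) i)"

lemma is_pivot_unique: "is_pivot s r i \<Longrightarrow> is_pivot s r k \<Longrightarrow> i = k"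
  unfolding is_pivot_def by (metis linorder_neqE_nat not_less)

lemma diag_weak_popovD:
  assumes "diag_weak_popov s P" "i < dim_row P"
  shows "i < dim_col P" "P $$ (i,i) \<noteq> 0"
    "\<And>j. j < dim_col P \<Longrightarrow> P $$ (i,j) \<noteq> 0 \<Longrightarrow>
      int (degree (P $$ (i,j))) + s $ j \<le> int (degree (P $$ (i,i))) + s $ i"
    "\<And>j. j < dim_col P \<Longrightarrow> i < j \<Longrightarrow> P $$ (i,j) \<noteq> 0 \<Longrightarrow>
      int (degree (P $$ (i,j))) + s $ j < int (degree (P $$ (i,i))) + s $ i"
  using assms by (auto simp: diag_weak_popov_def is_pivot_def)

lemma diag_weak_popov_term_bound:
  fixes P :: "'b::comm_ring_1 poly mat"
  assumes "diag_weak_popov s P" "i < dim_row P" "j < dim_col P"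
  shows "poly_deg_le (q * P $$ (i,j))
    (int (degree q) + int (degree (P $$ (i,i))) + s $ i - s $ j - (if i < j then 1 else 0))"
proof -
  have "poly_deg_le (P $$ (i,j)) (int (degree (P $$ (i,i))) + s $ i - s $ j - (if i < j then 1 else 0))"
    using diag_weak_popovD[OF assms(1,2)] assms(3) by (force simp: poly_deg_le_def)
  from poly_deg_le_mult[OF poly_deg_le_degree this] show ?thesis
    by (simp add: algebra_simps)
qed

lemma predictable_degree_at:
  fixes P :: "'b::idom poly mat" and c :: "'b poly vec" and s :: "int vec"
  defines "w \<equiv> \<lambda>l. int (degree (c $ l)) + int (degree (P $$ (l,l))) + s $ l"
  assumes P: "P \<in> carrier_mat m m" and W: "diag_weak_popov s P" and c: "dim_vec c = m"
    and k: "k < m" "c $ k \<noteq> 0"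
    and max: "\<And>l. l < m \<Longrightarrow> c $ l \<noteq> 0 \<Longrightarrow> w l \<le> w k"
    and last: "\<And>l. l < m \<Longrightarrow> k < l \<Longrightarrow> c $ l \<noteq> 0 \<Longrightarrow> w l < w k"
  shows "is_pivot s (row_comb c P) k"
    "degree (row_comb c P $ k) = degree (c $ k) + degree (P $$ (k,k))"
    "lead_coeff (row_comb c P $ k) = lead_coeff (c $ k) * lead_coeff (P $$ (k,k))"
proof -
  have Pr: "dim_row P = m" "dim_col P = m" using P by auto
  have summand: "poly_deg_le (c $ l * P $$ (l,j)) (w l - s $ j - (if l < j then 1 else 0))"
    if "l < m" "j < m" for l j
    using diag_weak_popov_term_bound[OF W, of l j "c $ l"] that Pr by (simp add: w_def)
  have off: "poly_deg_le (c $ l * P $$ (l,j)) (w k - s $ j - (if k \<le> j then 1 else 0))"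
    if l: "l < m" "l \<noteq> k" and j: "j < m" for l j
  proof (cases "c $ l = 0")
    case False
    have "w l - (if l < j then 1 else 0) \<le> w k - (if k \<le> j then 1 else 0)"
      using max[OF l(1) False] last[OF l(1) _ False] l(2) by auto
    then show ?thesis using summand[OF l(1) j] by (auto elim: poly_deg_le_mono)
  qed simp
  have Pkk: "P $$ (k,k) \<noteq> 0" using diag_weak_popovD(2)[OF W] k Pr by simp
  have lead_nz: "c $ k * P $$ (k,k) \<noteq> 0" using k Pkk by simp
  have lead_deg: "int (degree (c $ k * P $$ (k,k))) = w k - s $ k"
    using k Pkk by (simp add: w_def degree_mult_eq)
  have split: "row_comb c P $ j = c $ k * P $$ (k,j) + (\<Sum>l\<in>{..<m}-{k}. c $ l * P $$ (l,j))"
    if "j < m" for j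
    using that k Pr by (simp add: row_comb_index sum.remove[of "{..<m}" k])
  have rest: "poly_deg_le (\<Sum>l\<in>{..<m}-{k}. c $ l * P $$ (l,j)) (w k - s $ j - (if k \<le> j then 1 else 0))"
    if "j < m" for j
    by (rule poly_deg_le_sum) (use off that in auto)
  have top: "row_comb c P $ k \<noteq> 0" "degree (row_comb c P $ k) = degree (c $ k * P $$ (k,k))"
    "lead_coeff (row_comb c P $ k) = lead_coeff (c $ k * P $$ (k,k))"
    using add_lower_degree[OF lead_nz, of "\<Sum>l\<in>{..<m}-{k}. c $ l * P $$ (l,k)"] rest[OF k(1)]
    unfolding split[OF k(1)] lead_deg by simp_all
  have bound: "poly_deg_le (row_comb c P $ j) (w k - s $ j - (if k < j then 1 else 0))" if "j < m" for j
    unfolding split[OF that]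
    by (rule poly_deg_le_add[OF summand[OF k(1) that] poly_deg_le_mono[OF rest[OF that]]]) auto
  have pivot_deg: "int (degree (row_comb c P $ k)) + s $ k = w k"
    using top(2) lead_deg by simp
  show "is_pivot s (row_comb c P) k"
    unfolding is_pivot_def
  proof (intro conjI allI impI)
    fix j assume "j < dim_vec (row_comb c P)" "row_comb c P $ j \<noteq> 0"
    then show "int (degree (row_comb c P $ j)) + s $ j \<le> int (degree (row_comb c P $ k)) + s $ k"
      using bound[of j] Pr pivot_deg by (auto simp: poly_deg_le_def split: if_splits)
  next
    fix j assume "j < dim_vec (row_comb c P)" "k < j" "row_comb c P $ j \<noteq> 0"
    then show "int (degree (row_comb c P $ j)) + s $ j < int (degree (row_comb c P $ k)) + s $ k"
      using bound[of j] Pr pivot_deg by (auto simp: poly_deg_le_def)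
  qed (use k Pr top(1) in auto)
  show "degree (row_comb c P $ k) = degree (c $ k) + degree (P $$ (k,k))"
    using top(2) k Pkk by (simp add: degree_mult_eq)
  show "lead_coeff (row_comb c P $ k) = lead_coeff (c $ k) * lead_coeff (P $$ (k,k))"
    using top(2,3) by (simp add: lead_coeff_mult)
qed

lemma predictable_degree:
  fixes P :: "'b::idom poly mat"
  assumes P: "P \<in> carrier_mat m m" and W: "diag_weak_popov s P" and c: "dim_vec c = m"
    and c0: "c \<noteq> 0\<^sub>v m"
  obtains k where "k < m" "c $ k \<noteq> 0" "is_pivot s (row_comb c P) k"
    "degree (row_comb c P $ k) = degree (c $ k) + degree (P $$ (k,k))"
    "lead_coeff (row_comb c P $ k) = lead_coeff (c $ k) * lead_coeff (P $$ (k,k))"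
proof -
  define S where "S = {l. l < m \<and> c $ l \<noteq> 0}"
  define w where "w l = int (degree (c $ l)) + int (degree (P $$ (l,l))) + s $ l" for l
  have "S \<noteq> {}" using c c0 by (auto simp: S_def vec_eq_iff)
  moreover have "finite S" by (simp add: S_def)
  ultimately obtain k where k: "k \<in> S"
    and max: "\<And>l. l \<in> S \<Longrightarrow> w l \<le> w k" and last: "\<And>l. l \<in> S \<Longrightarrow> k < l \<Longrightarrow> w l < w k"
    using obtain_last_maximizer[of S w] by blast
  have km: "k < m" "c $ k \<noteq> 0" using k by (auto simp: S_def)
  have bounds: "\<And>l. l < m \<Longrightarrow> c $ l \<noteq> 0 \<Longrightarrow> w l \<le> w k"
    "\<And>l. l < m \<Longrightarrow> k < l \<Longrightarrow> c $ l \<noteq> 0 \<Longrightarrow> w l < w k"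
    using max last by (auto simp: S_def)
  show ?thesis
    using predictable_degree_at[OF P W c km bounds[unfolded w_def]] by (rule that[OF km])
qed

lemma is_pivot_row_comb_if_off_diag_low:
  fixes W :: "'b::idom poly mat"
  assumes W: "W \<in> carrier_mat m m" "diag_weak_popov s W" and c: "dim_vec c = m" and i: "i < m"
    and nz: "row_comb c W $ i \<noteq> 0"
    and low: "\<And>k. k < m \<Longrightarrow> k \<noteq> i \<Longrightarrow> poly_deg_le (row_comb c W $ k) (int (degree (W $$ (k,k))) - 1)"
  shows "is_pivot s (row_comb c W) i"
proof -
  have "c \<noteq> 0\<^sub>v m" using nz row_comb_zero[of W] W(1) i by auto
  from predictable_degree[OF W c this] obtain k where k: "k < m" "is_pivot s (row_comb c W) k"
    "degree (row_comb c W $ k) = degree (c $ k) + degree (W $$ (k,k))" .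
  have "k = i"
  proof (rule ccontr)
    assume "k \<noteq> i"
    with low[OF k(1)] k(2,3) show False by (auto simp: poly_deg_le_def is_pivot_def)
  qed
  with k(2) show ?thesis by simp
qed

section \<open>Division by a matrix with monic diagonal pivots\<close>

definition reduced_mod_diag :: "'b::zero poly mat \<Rightarrow> 'b poly vec \<Rightarrow> nat \<Rightarrow> bool" where
  "reduced_mod_diag P p l \<longleftrightarrow> poly_deg_le (p $ l) (int (degree (P $$ (l,l))) - 1)"

text \<open>Cancel the leading term of entry \<open>j0\<close> against row \<open>j0\<close> of \<open>P\<close>; by the pivot conditions this
  can only create entries of smaller \<open>s\<close>-degree, or of the same one at smaller indices.\<close>

lemma division_step:
  fixes P :: "'b::field poly mat" and p :: "'b poly vec" and s :: "int vec" and j0 :: nat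
  defines "\<nu> \<equiv> int (degree (p $ j0)) + s $ j0"
  assumes P: "P \<in> carrier_mat m m" and W: "diag_weak_popov s P"
    and monic: "\<And>j. j < m \<Longrightarrow> lead_coeff (P $$ (j,j)) = 1"
    and p: "dim_vec p = m" and j0: "j0 < m" "\<not> reduced_mod_diag P p j0"
    and max: "\<And>l. l < m \<Longrightarrow> \<not> reduced_mod_diag P p l \<Longrightarrow> int (degree (p $ l)) + s $ l \<le> \<nu>"
    and last: "\<And>l. l < m \<Longrightarrow> j0 < l \<Longrightarrow> \<not> reduced_mod_diag P p l \<Longrightarrow> int (degree (p $ l)) + s $ l < \<nu>"
  obtains u where "dim_vec u = m"
    "\<And>l. l < m \<Longrightarrow> \<not> reduced_mod_diag P (p - row_comb u P) l \<Longrightarrow>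
      int (degree ((p - row_comb u P) $ l)) + s $ l < \<nu> \<or>
      (int (degree ((p - row_comb u P) $ l)) + s $ l = \<nu> \<and> l < j0)"
proof
  have Pr: "dim_row P = m" "dim_col P = m" using P by auto
  define a where "a = lead_coeff (p $ j0)"
  define e where "e = degree (p $ j0) - degree (P $$ (j0,j0))"
  define u where "u = vec m (\<lambda>i. if i = j0 then monom a e else 0)"
  show "dim_vec u = m" by (simp add: u_def)
  have pj0: "p $ j0 \<noteq> 0" "degree (P $$ (j0,j0)) \<le> degree (p $ j0)"
    using j0 by (auto simp: reduced_mod_diag_def poly_deg_le_def)
  then have a: "a \<noteq> 0" and deg_monom: "degree (monom a e) = e"
    by (simp_all add: a_def degree_monom_eq)
  have entry: "(p - row_comb u P) $ l = p $ l - monom a e * P $$ (j0,l)" if "l < m" for l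
    using row_comb_unit_index[of j0 P l "monom a e"] that j0 Pr p by (simp add: u_def)
  have "int (degree (monom a e)) + int (degree (P $$ (j0,j0))) + s $ j0 = \<nu>"
    unfolding deg_monom using pj0(2) by (simp add: e_def \<nu>_def)
  then have sub: "poly_deg_le (monom a e * P $$ (j0,l)) (\<nu> - s $ l - (if j0 < l then 1 else 0))"
    if "l < m" for l
    using diag_weak_popov_term_bound[OF W, of j0 l "monom a e"] that j0 Pr by simp
  fix l assume l: "l < m" and unred: "\<not> reduced_mod_diag P (p - row_comb u P) l"
  show "int (degree ((p - row_comb u P) $ l)) + s $ l < \<nu> \<or>
      (int (degree ((p - row_comb u P) $ l)) + s $ l = \<nu> \<and> l < j0)"
  proof (cases "l = j0")
    case True
    have "P $$ (j0,j0) \<noteq> 0" using diag_weak_popovD(2)[OF W, of j0] j0 Pr by simp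
    then have "degree (monom a e * P $$ (j0,j0)) = e + degree (P $$ (j0,j0))"
      using degree_mult_eq[of "monom a e" "P $$ (j0,j0)"] a deg_monom by simp
    also have "\<dots> = degree (p $ j0)" using pj0(2) by (simp add: e_def)
    finally have deg: "degree (monom a e * P $$ (j0,j0)) = degree (p $ j0)" .
    have lc: "lead_coeff (monom a e * P $$ (j0,j0)) = lead_coeff (p $ j0)"
      unfolding lead_coeff_mult lead_coeff_monom monic[OF j0(1)] by (simp add: a_def)
    from poly_deg_le_diff_same_lead[OF deg lc] have "poly_deg_le ((p - row_comb u P) $ j0) (\<nu> - s $ j0 - 1)"
      using entry[OF j0(1)] by (simp add: \<nu>_def)
    then show ?thesis using True unred by (auto simp: reduced_mod_diag_def poly_deg_le_def)
  next
    case False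
    define B where "B = \<nu> - s $ l - (if j0 < l then 1 else 0)"
    have "poly_deg_le (p $ l) (max (int (degree (P $$ (l,l))) - 1) B)"
    proof (cases "reduced_mod_diag P p l")
      case True
      then show ?thesis unfolding reduced_mod_diag_def by (rule poly_deg_le_mono) simp
    next
      case False
      then have "poly_deg_le (p $ l) B"
        using max[OF l] last[OF l] \<open>l \<noteq> j0\<close> by (auto simp: B_def poly_deg_le_def)
      then show ?thesis by (rule poly_deg_le_mono) simp
    qed
    then have "poly_deg_le ((p - row_comb u P) $ l) (max (int (degree (P $$ (l,l))) - 1) B)"
      unfolding entry[OF l] by (rule poly_deg_le_diff[OF _ poly_deg_le_mono[OF sub[OF l]]]) (simp add: B_def)
    then have "int (degree ((p - row_comb u P) $ l)) \<le> B"
      using unred by (auto simp: reduced_mod_diag_def poly_deg_le_def)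
    then show ?thesis using False by (auto simp: B_def split: if_splits)
  qed
qed

lemma lex_encode_less:
  fixes x y L :: int and l j M :: nat
  assumes "L \<le> x" "l < M" "x < y \<or> (x = y \<and> l < j)"
  shows "nat (x - L) * M + l < nat (y - L) * M + j"
proof (cases "x < y")
  case True
  then have "nat (x - L) + 1 \<le> nat (y - L)" using assms(1) by linarith
  then have "(nat (x - L) + 1) * M \<le> nat (y - L) * M" by (rule mult_le_mono1)
  then show ?thesis using assms(2) by simp
qed (use assms in simp)

text \<open>Termination: the pair (\<open>s\<close>-degree, index) of the worst unreduced entry, encoded as a
  natural number, strictly decreases; unreduced entries have \<open>s\<close>-degree at least
  \<open>-\<Sum>|s\<^sub>l|\<close>.\<close>

lemma division:
  fixes P :: "'b::field poly mat"
  assumes P: "P \<in> carrier_mat m m" and W: "diag_weak_popov s P"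
    and monic: "\<And>j. j < m \<Longrightarrow> lead_coeff (P $$ (j,j)) = 1"
    and p: "dim_vec p = m"
  obtains c where "dim_vec c = m" "\<And>l. l < m \<Longrightarrow> reduced_mod_diag P (p - row_comb c P) l"
proof -
  have Pr: "dim_row P = m" "dim_col P = m" using P by auto
  define L where "L = - (\<Sum>l<m. \<bar>s $ l\<bar>)"
  define rank where "rank p l = nat (int (degree (p $ l)) + s $ l - L) * (m + 1) + l"
    for p :: "'b poly vec" and l
  have low: "L \<le> int (degree (p $ l)) + s $ l" if "l < m" "\<not> reduced_mod_diag P p l" for p l
  proof -
    have "\<bar>s $ l\<bar> \<le> (\<Sum>l<m. \<bar>s $ l\<bar>)" using that by (intro member_le_sum) auto
    then show ?thesis using that by (auto simp: L_def reduced_mod_diag_def poly_deg_le_def)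
  qed
  have all_reduced: "\<exists>c. dim_vec c = m \<and> (\<forall>l<m. reduced_mod_diag P (p - row_comb c P) l)"
    if "dim_vec p = m" "\<forall>l<m. reduced_mod_diag P p l" for p
    using that row_comb_zero[of P] Pr by (intro exI[of _ "0\<^sub>v m"]) auto
  have main: "\<exists>c. dim_vec c = m \<and> (\<forall>l<m. reduced_mod_diag P (p - row_comb c P) l)"
    if "dim_vec p = m" "\<And>l. l < m \<Longrightarrow> \<not> reduced_mod_diag P p l \<Longrightarrow> rank p l < N" for N p
    using that
  proof (induction N arbitrary: p)
    case 0
    then have "\<forall>l<m. reduced_mod_diag P p l" by (metis less_nat_zero_code)
    with all_reduced 0(1) show ?case by blast
  next
    case (Suc N)
    show ?case
    proof (cases "\<forall>l<m. reduced_mod_diag P p l")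
      case True
      then show ?thesis using all_reduced Suc.prems(1) by blast
    next
      case False
      define S where "S = {l. l < m \<and> \<not> reduced_mod_diag P p l}"
      define v where "v l = int (degree (p $ l)) + s $ l" for l
      have "finite S" "S \<noteq> {}" using False by (auto simp: S_def)
      then obtain j0 where "j0 \<in> S" "\<And>l. l \<in> S \<Longrightarrow> v l \<le> v j0" "\<And>l. l \<in> S \<Longrightarrow> j0 < l \<Longrightarrow> v l < v j0"
        using obtain_last_maximizer[of S v] by blast
      then have j0: "j0 < m" "\<not> reduced_mod_diag P p j0"
        and "\<And>l. l < m \<Longrightarrow> \<not> reduced_mod_diag P p l \<Longrightarrow> int (degree (p $ l)) + s $ l \<le> int (degree (p $ j0)) + s $ j0"
        and "\<And>l. l < m \<Longrightarrow> j0 < l \<Longrightarrow> \<not> reduced_mod_diag P p l \<Longrightarrow>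
          int (degree (p $ l)) + s $ l < int (degree (p $ j0)) + s $ j0"
        unfolding S_def v_def by auto
      from division_step[OF P W monic Suc.prems(1) this] obtain u where u: "dim_vec u = m"
        and lex: "\<And>l. l < m \<Longrightarrow> \<not> reduced_mod_diag P (p - row_comb u P) l \<Longrightarrow>
          int (degree ((p - row_comb u P) $ l)) + s $ l < int (degree (p $ j0)) + s $ j0 \<or>
          (int (degree ((p - row_comb u P) $ l)) + s $ l = int (degree (p $ j0)) + s $ j0 \<and> l < j0)"
        by blast
      have "rank p j0 < Suc N" using Suc.prems(2) j0 .
      then have "rank (p - row_comb u P) l < N"
        if "l < m" "\<not> reduced_mod_diag P (p - row_comb u P) l" for l
        using lex_encode_less[OF low[OF that] _ lex[OF that], of "m + 1"] that
        unfolding rank_def by simp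
      moreover have "dim_vec (p - row_comb u P) = m" using Suc.prems(1) Pr by simp
      ultimately obtain c where c: "dim_vec c = m"
        "\<forall>l<m. reduced_mod_diag P (p - row_comb u P - row_comb c P) l"
        using Suc.IH by blast
      have "p - row_comb u P - row_comb c P = p - row_comb (c + u) P"
        using row_comb_add[of c P u] c u Suc.prems(1) Pr by auto
      then show ?thesis using c u by (intro exI[of _ "c + u"]) auto
    qed
  qed
  have "rank p l < Suc (\<Sum>l<m. rank p l)" if "l < m" for l
    using that by (simp add: le_imp_less_Suc member_le_sum)
  with main[OF p] obtain c where "dim_vec c = m" "\<forall>l<m. reduced_mod_diag P (p - row_comb c P) l"
    by blast
  then show ?thesis using that by blast
qed

lemma permutes_decreasing_eq_id:
  fixes p :: "nat \<Rightarrow> nat"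
  assumes p: "p permutes {0..<m}" and le: "\<And>i. i < m \<Longrightarrow> p i \<le> i"
  shows "p = id"
proof -
  have "p i = i" if "i < m" for i
    using that
  proof (induction i rule: less_induct)
    case (less i)
    show ?case
    proof (rule ccontr)
      assume ne: "p i \<noteq> i"
      then have "p i < i" using le[OF less.prems] by simp
      then have "p (p i) = p i" using less by simp
      then show False using permutes_inj[OF p] ne by (metis injD)
    qed
  qed
  moreover have "p i = i" if "\<not> i < m" for i using permutes_not_in[OF p] that by simp
  ultimately show ?thesis by (auto simp: fun_eq_iff)
qed

text \<open>Every permutation other than the identity passes through an entry strictly above the
  diagonal, where the pivot condition loses one degree; the shifts \<open>s\<close> cancel over a permutation.\<close>

lemma degree_perm_term_lt_diag:
  fixes P :: "'b::comm_ring_1 poly mat"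
  assumes P: "P \<in> carrier_mat m m" and W: "diag_weak_popov s P"
    and p: "p permutes {0..<m}" "p \<noteq> id"
  shows "poly_deg_le (\<Prod>i = 0..<m. P $$ (i, p i)) (int (\<Sum>i = 0..<m. degree (P $$ (i,i))) - 1)"
proof -
  obtain i0 where i0: "i0 < m" "i0 < p i0" using permutes_decreasing_eq_id[OF p(1)] p(2) by force
  have pi: "p i < m" if "i < m" for i using permutes_in_image[OF p(1)] that by simp
  define b where "b i = int (degree (P $$ (i,i))) + s $ i - s $ p i - (if i = i0 then 1 else 0)" for i
  have "poly_deg_le (\<Prod>i = 0..<m. P $$ (i, p i)) (\<Sum>i = 0..<m. b i)"
  proof (rule poly_deg_le_prod, simp)
    fix i assume "i \<in> {0..<m}"
    then have i: "i < m" by simp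
    have "poly_deg_le (P $$ (i, p i))
        (int (degree (P $$ (i,i))) + s $ i - s $ p i - (if i < p i then 1 else 0))"
      using diag_weak_popov_term_bound[OF W, of i "p i" 1] i pi[OF i] P by simp
    then show "poly_deg_le (P $$ (i, p i)) (b i)"
      by (rule poly_deg_le_mono) (use i0 in \<open>auto simp: b_def\<close>)
  qed
  moreover have "(\<Sum>i = 0..<m. s $ p i) = (\<Sum>i = 0..<m. s $ i)"
    using sum.reindex[OF permutes_inj_on[OF p(1), of "{0..<m}"], of "\<lambda>i. s $ i"]
      permutes_image[OF p(1)] by (simp add: comp_def)
  then have "(\<Sum>i = 0..<m. b i) = int (\<Sum>i = 0..<m. degree (P $$ (i,i))) - 1"
    using i0 by (simp add: b_def sum_subtractf sum.distrib)
  ultimately show ?thesis by simp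
qed

lemma det_neq_0_if_diag_weak_popov:
  fixes P :: "'b::field poly mat"
  assumes P: "P \<in> carrier_mat m m" and W: "diag_weak_popov s P"
    and monic: "\<And>j. j < m \<Longrightarrow> lead_coeff (P $$ (j,j)) = 1"
  shows "det P \<noteq> 0"
proof -
  define N where "N = (\<Sum>i = 0..<m. degree (P $$ (i,i)))"
  have other: "coeff (signof p * (\<Prod>i = 0..<m. P $$ (i, p i))) N = 0"
    if "p permutes {0..<m}" "p \<noteq> id" for p
  proof -
    have "poly_deg_le (\<Prod>i = 0..<m. P $$ (i, p i)) (int N - 1)"
      using degree_perm_term_lt_diag[OF P W that] by (simp only: N_def)
    then consider "(\<Prod>i = 0..<m. P $$ (i, p i)) = 0" | "degree (\<Prod>i = 0..<m. P $$ (i, p i)) < N"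
      unfolding poly_deg_le_def by linarith
    then have "coeff (\<Prod>i = 0..<m. P $$ (i, p i)) N = 0"
      by cases (simp_all only: coeff_0 coeff_eq_0)
    then show ?thesis by (cases p rule: sign_cases) simp_all
  qed
  have "degree (\<Prod>i = 0..<m. P $$ (i,i)) = N"
    unfolding N_def by (rule degree_prod_sum_eq) (use diag_weak_popovD(2)[OF W] P in auto)
  then have id: "coeff (\<Prod>i = 0..<m. P $$ (i,i)) N = 1"
    using lead_coeff_prod[of "\<lambda>i. P $$ (i,i)" "{0..<m}"] monic by simp
  have "coeff (det P) N = (\<Sum>p\<in>{p. p permutes {0..<m}}. coeff (signof p * (\<Prod>i = 0..<m. P $$ (i, p i))) N)"
    by (simp add: det_def'[OF P] coeff_sum)
  also have "\<dots> = coeff (signof (id::nat \<Rightarrow> nat) * (\<Prod>i = 0..<m. P $$ (i, id i))) N"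
    using other by (subst sum.remove[of _ id]) (auto simp: permutes_id finite_permutations intro!: sum.neutral)
  also have "\<dots> = 1" using id by simp
  finally show ?thesis by auto
qed

lemma is_pivot_sdeg: "is_pivot s r i \<Longrightarrow> sdeg s r = int (degree (r $ i)) + s $ i"
  unfolding sdeg_def is_pivot_def by (rule Max_eqI) auto

lemma is_pivot_iff_pivot_index:
  assumes "i < dim_vec r" "r $ i \<noteq> 0"
  shows "is_pivot s r i \<longleftrightarrow> pivot_index s r = i"
proof
  assume piv: "is_pivot s r i"
  show "pivot_index s r = i"
    unfolding pivot_index_def is_pivot_sdeg[OF piv]
  proof (rule Max_eqI)
    fix j
    assume "j \<in> {j. j < dim_vec r \<and> r $ j \<noteq> 0 \<and> int (degree (r $ j)) + s $ j = int (degree (r $ i)) + s $ i}"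
    then show "j \<le> i" using piv by (auto simp: is_pivot_def not_le[symmetric])
  qed (use assms in auto)
next
  assume pv: "pivot_index s r = i"
  define S where "S = {j. j < dim_vec r \<and> r $ j \<noteq> 0 \<and> int (degree (r $ j)) + s $ j = sdeg s r}"
  have fin: "finite {int (degree (r $ j)) + s $ j | j. j < dim_vec r \<and> r $ j \<noteq> 0}" by simp
  have le: "int (degree (r $ j)) + s $ j \<le> sdeg s r" if "j < dim_vec r" "r $ j \<noteq> 0" for j
    unfolding sdeg_def using that by (intro Max_ge[OF fin]) auto
  have "sdeg s r \<in> {int (degree (r $ j)) + s $ j | j. j < dim_vec r \<and> r $ j \<noteq> 0}"
    unfolding sdeg_def using assms by (intro Max_in[OF fin]) auto
  then have "S \<noteq> {}" by (auto simp: S_def)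
  moreover have fS: "finite S" by (simp add: S_def)
  moreover have i: "i = Max S" using pv by (simp add: pivot_index_def S_def)
  ultimately have iS: "i \<in> S" and jS: "\<And>j. j \<in> S \<Longrightarrow> j \<le> i"
    using Max_ge[OF fS] by auto
  show "is_pivot s r i"
    unfolding is_pivot_def
  proof (intro conjI allI impI)
    fix j assume "j < dim_vec r" "r $ j \<noteq> 0"
    then show "int (degree (r $ j)) + s $ j \<le> int (degree (r $ i)) + s $ i"
      using le iS by (simp add: S_def)
  next
    fix j assume j: "j < dim_vec r" "i < j" "r $ j \<noteq> 0"
    then have "j \<notin> S" using jS by force
    then show "int (degree (r $ j)) + s $ j < int (degree (r $ i)) + s $ i"
      using le[OF j(1,3)] iS j by (auto simp: S_def)
  qed (use assms in auto)
qed

lemma s_popovD: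
  assumes popov: "s_popov s P" and P: "P \<in> carrier_mat m m"
  shows "dim_vec s = m" "det P \<noteq> 0" "diag_weak_popov s P"
    "\<And>i. i < m \<Longrightarrow> lead_coeff (P $$ (i,i)) = 1"
    "\<And>i j. i < m \<Longrightarrow> j < m \<Longrightarrow> i \<noteq> j \<Longrightarrow> P $$ (i,j) = 0 \<or> degree (P $$ (i,j)) < degree (P $$ (j,j))"
proof -
  obtain m' where m': "P \<in> carrier_mat m' m'" "dim_vec s = m'" "det P \<noteq> 0"
    "\<And>i. i < m' \<Longrightarrow> pivot_index s (row P i) = i \<and> lead_coeff (P $$ (i,i)) = 1"
    "\<And>i j. i < m' \<Longrightarrow> j < m' \<Longrightarrow> i \<noteq> j \<Longrightarrow> P $$ (i,j) = 0 \<or> degree (P $$ (i,j)) < degree (P $$ (j,j))"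
    using popov unfolding s_popov_def by blast
  then have "m' = m" using P by auto
  with m' show "dim_vec s = m" "det P \<noteq> 0" "\<And>i. i < m \<Longrightarrow> lead_coeff (P $$ (i,i)) = 1"
    "\<And>i j. i < m \<Longrightarrow> j < m \<Longrightarrow> i \<noteq> j \<Longrightarrow> P $$ (i,j) = 0 \<or> degree (P $$ (i,j)) < degree (P $$ (j,j))"
    by auto
  show "diag_weak_popov s P"
    unfolding diag_weak_popov_def
  proof (intro allI impI)
    fix i assume i: "i < dim_row P"
    then have "P $$ (i,i) \<noteq> 0" using m'(4)[of i] m'(1) by auto
    then show "is_pivot s (row P i) i"
      using is_pivot_iff_pivot_index[of i "row P i" s] m'(1,4) i by auto
  qed
qed

lemma s_popov_if_diag_weak_popov:
  fixes P :: "'b::field poly mat"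
  assumes P: "P \<in> carrier_mat m m" and D: "diag_weak_popov s P" and s: "dim_vec s = m"
    and monic: "\<And>i. i < m \<Longrightarrow> lead_coeff (P $$ (i,i)) = 1"
    and cols: "\<And>i j. i < m \<Longrightarrow> j < m \<Longrightarrow> i \<noteq> j \<Longrightarrow>
      poly_deg_le (P $$ (i,j)) (int (degree (P $$ (j,j))) - 1)"
  shows "s_popov s P"
  unfolding s_popov_def
proof (intro exI[of _ m] conjI allI impI)
  show "det P \<noteq> 0" by (rule det_neq_0_if_diag_weak_popov[OF P D monic])
  fix i assume i: "i < m"
  show "pivot_index s (row P i) = i"
    using is_pivot_iff_pivot_index[of i "row P i" s] D diag_weak_popovD(2)[OF D, of i] P i
    by (simp add: diag_weak_popov_def)
  fix j assume "j < m" "i \<noteq> j"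
  then show "P $$ (i,j) = 0 \<or> degree (P $$ (i,j)) < degree (P $$ (j,j))"
    using cols[OF i] by (auto simp: poly_deg_le_def)
qed (use P s monic in auto)

lemma full_row_rank_lower_triangular:
  fixes A :: "'b::field mat"
  assumes A: "A \<in> carrier_mat m m" and lower: "\<And>i j. i < m \<Longrightarrow> j < m \<Longrightarrow> i < j \<Longrightarrow> A $$ (i,j) = 0"
    and diag: "\<And>i. i < m \<Longrightarrow> A $$ (i,i) \<noteq> 0"
  shows "full_row_rank A"
  unfolding full_row_rank_def
proof (intro allI impI)
  fix c :: "'b vec"
  assume c: "dim_vec c = dim_row A" and z: "vec (dim_col A) (\<lambda>j. \<Sum>i<dim_row A. c $ i * A $$ (i,j)) = 0\<^sub>v (dim_col A)"
  show "c = 0\<^sub>v (dim_row A)"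
  proof (rule ccontr)
    assume "c \<noteq> 0\<^sub>v (dim_row A)"
    then have S: "finite {k. k < m \<and> c $ k \<noteq> 0}" "{k. k < m \<and> c $ k \<noteq> 0} \<noteq> {}"
      using c A by (auto simp: vec_eq_iff)
    define i where "i = Max {k. k < m \<and> c $ k \<noteq> 0}"
    have i: "i < m" "c $ i \<noteq> 0" using Max_in[OF S] by (auto simp: i_def)
    have above: "c $ l = 0" if "i < l" "l < m" for l
    proof (rule ccontr)
      assume "c $ l \<noteq> 0"
      then have "l \<le> i" using Max_ge[OF S(1), of l] that by (simp add: i_def)
      then show False using that by simp
    qed
    have "0 = (\<Sum>l<m. c $ l * A $$ (l,i))"
      using arg_cong[OF z, of "\<lambda>v. v $ i"] i A by simp
    also have "\<dots> = c $ i * A $$ (i,i) + (\<Sum>l\<in>{..<m}-{i}. c $ l * A $$ (l,i))"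
      using i by (simp add: sum.remove)
    also have "(\<Sum>l\<in>{..<m}-{i}. c $ l * A $$ (l,i)) = 0"
      using lower[OF _ i(1)] above by (intro sum.neutral) (auto simp: neq_iff)
    finally show False using i diag[OF i(1)] by simp
  qed
qed

lemma full_row_rank_leading_mat:
  fixes W :: "'b::field poly mat"
  assumes W: "W \<in> carrier_mat m m" and D: "diag_weak_popov s W"
  shows "full_row_rank (leading_mat s W)"
proof -
  have sd: "sdeg s (row W i) = int (degree (W $$ (i,i))) + s $ i" if "i < m" for i
    using is_pivot_sdeg[of s "row W i" i] D W that by (simp add: diag_weak_popov_def)
  show ?thesis
  proof (rule full_row_rank_lower_triangular[of _ m])
    show "leading_mat s W \<in> carrier_mat m m" using W by (simp add: leading_mat_def)
  next
    fix i j assume ij: "i < m" "j < m" "i < j"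
    show "leading_mat s W $$ (i,j) = 0"
    proof (cases "W $$ (i,j) = 0")
      case False
      then have "int (degree (W $$ (i,j))) + s $ j < int (degree (W $$ (i,i))) + s $ i"
        using diag_weak_popovD(4)[OF D, of i j] ij W by simp
      then show ?thesis using ij W sd[OF ij(1)]
        by (auto simp: leading_mat_def Let_def intro!: coeff_eq_0)
    qed (use ij W in \<open>simp add: leading_mat_def Let_def\<close>)
  next
    fix i assume i: "i < m"
    then show "leading_mat s W $$ (i,i) \<noteq> 0"
      using W sd[OF i] diag_weak_popovD(2)[OF D, of i] by (simp add: leading_mat_def Let_def)
  qed
qed

lemma s_reduced_if_diag_weak_popov:
  fixes W :: "'b::field poly mat"
  assumes W: "W \<in> carrier_mat m m" and D: "diag_weak_popov s W" and s: "dim_vec s = m"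
  shows "s_reduced s W"
  unfolding s_reduced_def
proof (intro conjI)
  show "full_row_rank W"
    unfolding full_row_rank_def
  proof (intro allI impI)
    fix c assume c: "dim_vec c = dim_row W"
      and z: "vec (dim_col W) (\<lambda>j. \<Sum>i<dim_row W. c $ i * W $$ (i,j)) = 0\<^sub>v (dim_col W)"
    show "c = 0\<^sub>v (dim_row W)"
    proof (rule ccontr)
      assume "c \<noteq> 0\<^sub>v (dim_row W)"
      then obtain k where "k < m" "is_pivot s (row_comb c W) k"
        using predictable_degree[OF W D] c W by (metis carrier_matD(1))
      moreover have "row_comb c W = 0\<^sub>v m" using z W by (simp add: row_comb_def)
      ultimately show False by (simp add: is_pivot_def)
    qed
  qed
qed (use W D s full_row_rank_leading_mat in auto)

section \<open>Popov interpolation bases\<close>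

lemma interpolant_degree_ge_diag:
  assumes ib: "is_interp_basis E J W" and W: "diag_weak_popov s W"
    and p: "is_interpolant E J p" "p \<noteq> 0\<^sub>v (dim_row E)"
  obtains k where "k < dim_row E" "p $ k \<noteq> 0" "degree (W $$ (k,k)) \<le> degree (p $ k)"
proof -
  have Wc: "W \<in> carrier_mat (dim_row E) (dim_row E)" using ib by (simp add: is_interp_basis_iff)
  obtain c where c: "dim_vec c = dim_row E" "p = row_comb c W"
    using ib p(1) Wc by (auto simp: is_interp_basis_iff)
  have "c \<noteq> 0\<^sub>v (dim_row E)" using c p(2) row_comb_zero[of W] Wc by auto
  from predictable_degree[OF Wc W c(1) this] obtain k where "k < dim_row E"
    "is_pivot s (row_comb c W) k" "degree (row_comb c W $ k) = degree (c $ k) + degree (W $$ (k,k))" .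
  then show ?thesis using c(2) by (intro that[of k]) (auto simp: is_pivot_def)
qed

lemma diag_degree_le_interpolant_rows:
  assumes ib: "is_interp_basis E J W" and W: "diag_weak_popov s W"
    and Q: "Q \<in> carrier_mat (dim_row E) (dim_row E)" "diag_weak_popov s Q"
      "\<And>i. i < dim_row E \<Longrightarrow> is_interpolant E J (row Q i)"
    and i: "i < dim_row E"
  shows "degree (W $$ (i,i)) \<le> degree (Q $$ (i,i))"
proof -
  have Wc: "W \<in> carrier_mat (dim_row E) (dim_row E)" using ib by (simp add: is_interp_basis_iff)
  obtain c where c: "dim_vec c = dim_row E" "row Q i = row_comb c W"
    using ib Q(3)[OF i] Wc by (auto simp: is_interp_basis_iff)
  have piv: "is_pivot s (row Q i) i" using Q(1,2) i by (simp add: diag_weak_popov_def)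
  have "c \<noteq> 0\<^sub>v (dim_row E)"
  proof
    assume "c = 0\<^sub>v (dim_row E)"
    then have "row Q i = 0\<^sub>v (dim_row E)" using c row_comb_zero[of W] Wc by auto
    then show False using piv i by (simp add: is_pivot_def)
  qed
  from predictable_degree[OF Wc W c(1) this] obtain k where
    "is_pivot s (row_comb c W) k" "degree (row_comb c W $ k) = degree (c $ k) + degree (W $$ (k,k))" .
  moreover have "k = i" using is_pivot_unique[OF piv[unfolded c(2)] calculation(1)] by simp
  moreover have "Q $$ (i,i) = row_comb c W $ i" using arg_cong[OF c(2), of "\<lambda>v. v $ i"] i Q(1) by simp
  ultimately show ?thesis by simp
qed

lemma s_popov_interp_basis_unique:
  fixes P Q :: "'b::field poly mat"
  assumes J: "J \<in> carrier_mat n n" and E: "dim_col E = n"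
    and P: "is_interp_basis E J P" "s_popov s P" and Q: "is_interp_basis E J Q" "s_popov s Q"
  shows "P = Q"
proof -
  define m where "m = dim_row E"
  have Pc: "P \<in> carrier_mat m m" and Qc: "Q \<in> carrier_mat m m"
    using P Q by (auto simp: is_interp_basis_iff m_def)
  note P' = s_popovD[OF P(2) Pc] and Q' = s_popovD[OF Q(2) Qc]
  have rP: "\<And>i. i < m \<Longrightarrow> is_interpolant E J (row P i)"
    and rQ: "\<And>i. i < m \<Longrightarrow> is_interpolant E J (row Q i)"
    using P Q Pc Qc by (auto simp: is_interp_basis_iff)
  have deg_eq: "degree (P $$ (i,i)) = degree (Q $$ (i,i))" if "i < m" for i
    using diag_degree_le_interpolant_rows[OF P(1) P'(3) Qc[unfolded m_def] Q'(3) rQ]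
      diag_degree_le_interpolant_rows[OF Q(1) Q'(3) Pc[unfolded m_def] P'(3) rP] that
    by (force simp: m_def)
  have rows: "row P i = row Q i" if i: "i < m" for i
  proof (rule ccontr)
    assume ne: "row P i \<noteq> row Q i"
    define d where "d = row P i - row Q i"
    have d: "is_interpolant E J d" unfolding d_def by (rule is_interpolant_diff[OF J E rP[OF i] rQ[OF i]])
    have "d \<noteq> 0\<^sub>v m" using ne Pc Qc by (auto simp: d_def vec_eq_iff)
    from interpolant_degree_ge_diag[OF P(1) P'(3) d this[unfolded m_def]] obtain k
      where k: "k < m" "d $ k \<noteq> 0" "degree (P $$ (k,k)) \<le> degree (d $ k)" by (auto simp: m_def)
    have dk: "d $ k = P $$ (i,k) - Q $$ (i,k)" using k i Pc Qc by (simp add: d_def)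
    have "poly_deg_le (d $ k) (int (degree (P $$ (k,k))) - 1)"
    proof (cases "k = i")
      case True
      have "degree (Q $$ (i,i)) = degree (P $$ (i,i))" "lead_coeff (Q $$ (i,i)) = lead_coeff (P $$ (i,i))"
        using deg_eq[OF i] P'(4)[OF i] Q'(4)[OF i] by simp_all
      from poly_deg_le_diff_same_lead[OF this] show ?thesis using True dk by simp
    next
      case False
      then have "poly_deg_le (P $$ (i,k)) (int (degree (P $$ (k,k))) - 1)"
        "poly_deg_le (Q $$ (i,k)) (int (degree (P $$ (k,k))) - 1)"
        using P'(5)[OF i k(1)] Q'(5)[OF i k(1)] deg_eq[OF k(1)] by (auto simp: poly_deg_le_def)
      then show ?thesis unfolding dk by (rule poly_deg_le_diff)
    qed
    then show False using k by (auto simp: poly_deg_le_def)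
  qed
  show ?thesis
  proof (rule eq_matI)
    fix i j assume "i < dim_row Q" "j < dim_col Q"
    then show "P $$ (i,j) = Q $$ (i,j)" using arg_cong[OF rows[of i], of "\<lambda>v. v $ j"] Pc Qc by simp
  qed (use Pc Qc in auto)
qed

text \<open>The remainder of an interpolant on division by \<open>P\<close> is an interpolant whose entries have
  degree below the diagonal degrees of the basis \<open>W\<close>, hence zero.\<close>

lemma interp_basis_if_same_diag_degrees:
  fixes P W :: "'b::field poly mat"
  assumes J: "J \<in> carrier_mat n n" and E: "dim_col E = n"
    and ib: "is_interp_basis E J W" and W: "diag_weak_popov s W"
    and P: "P \<in> carrier_mat (dim_row E) (dim_row E)" "diag_weak_popov s P"
      "\<And>i. i < dim_row E \<Longrightarrow> lead_coeff (P $$ (i,i)) = 1"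
      "\<And>i. i < dim_row E \<Longrightarrow> is_interpolant E J (row P i)"
      "\<And>i. i < dim_row E \<Longrightarrow> degree (P $$ (i,i)) = degree (W $$ (i,i))"
  shows "is_interp_basis E J P"
  unfolding is_interp_basis_iff
proof (intro conjI allI impI)
  show "P \<in> carrier_mat (dim_row E) (dim_row E)" by (rule P(1))
  show "is_interpolant E J (row P i)" if "i < dim_row P" for i using that P(1,4) by simp
next
  define m where "m = dim_row E"
  have Pc: "P \<in> carrier_mat m m" using P(1) by (simp add: m_def)
  fix p assume p: "is_interpolant E J p"
  have dp: "dim_vec p = m" using p by (simp add: is_interpolant_def m_def)
  obtain c where c: "dim_vec c = m" "\<And>l. l < m \<Longrightarrow> reduced_mod_diag P (p - row_comb c P) l"
    using division[OF Pc P(2) P(3)[folded m_def] dp] by blast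
  have rem: "is_interpolant E J (p - row_comb c P)"
    using P(1,4) c(1) by (intro is_interpolant_diff[OF J E p is_interpolant_row_comb[OF J E]]) (auto simp: m_def)
  have "p - row_comb c P = 0\<^sub>v m"
  proof (rule ccontr)
    assume "p - row_comb c P \<noteq> 0\<^sub>v m"
    from interpolant_degree_ge_diag[OF ib W rem this[unfolded m_def]] obtain k
      where "k < m" "(p - row_comb c P) $ k \<noteq> 0" "degree (W $$ (k,k)) \<le> degree ((p - row_comb c P) $ k)"
      by (auto simp: m_def)
    then show False using c(2)[of k] P(5)[of k] by (auto simp: reduced_mod_diag_def poly_deg_le_def m_def)
  qed
  then have "p = row_comb c P" using dp Pc by (auto simp: vec_eq_iff)
  then show "\<exists>c. dim_vec c = dim_row P \<and> p = row_comb c P" using c Pc by auto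
next
  fix c assume c: "dim_vec c = dim_row P" "row_comb c P = 0\<^sub>v (dim_col P)"
  show "c = 0\<^sub>v (dim_row P)"
  proof (rule ccontr)
    assume "c \<noteq> 0\<^sub>v (dim_row P)"
    then obtain k where "k < dim_row E" "is_pivot s (row_comb c P) k"
      using predictable_degree[OF P(1,2)] c(1) P(1) by (metis carrier_matD(1))
    then show False using c P(1) by (simp add: is_pivot_def)
  qed
qed

text \<open>The \<open>s\<close>-Popov basis is obtained by reducing \<open>X\<^sup>\<delta>\<^sup>i e\<^sub>i\<close> modulo a basis with monic diagonal
  pivots of degrees \<open>\<delta>\<close>.\<close>

lemma s_popov_interp_basis_exists:
  fixes W :: "'b::field poly mat"
  assumes J: "J \<in> carrier_mat n n" and E: "dim_col E = n"
    and ib: "is_interp_basis E J W" and W: "diag_weak_popov s W"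
    and monic: "\<And>i. i < dim_row E \<Longrightarrow> lead_coeff (W $$ (i,i)) = 1"
    and s: "dim_vec s = dim_row E"
  obtains P where "is_interp_basis E J P" "s_popov s P" "diag_degrees P = diag_degrees W"
proof -
  define m where "m = dim_row E"
  have Wc: "W \<in> carrier_mat m m" using ib by (simp add: is_interp_basis_iff m_def)
  define \<delta> where "\<delta> i = degree (W $$ (i,i))" for i
  define t where "t i = vec m (\<lambda>j. if j = i then monom (1::'b) (\<delta> i) else 0)" for i
  have "\<exists>c. dim_vec c = m \<and> (\<forall>l<m. reduced_mod_diag W (t i - row_comb c W) l)" for i
    using division[OF Wc W monic[folded m_def], of "t i"] by (auto simp: t_def)
  then obtain C where C: "\<And>i. dim_vec (C i) = m"
    "\<And>i l. l < m \<Longrightarrow> poly_deg_le ((t i - row_comb (C i) W) $ l) (int (\<delta> l) - 1)"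
    unfolding reduced_mod_diag_def \<delta>_def by metis
  define P where "P = mat m m (\<lambda>(i,j). row_comb (C i) W $ j)"
  have Pc: "P \<in> carrier_mat m m" by (simp add: P_def)
  have rowP: "row P i = row_comb (C i) W" if "i < m" for i
    using that Wc by (intro eq_vecI) (auto simp: P_def)
  have Pij: "P $$ (i,j) = t i $ j - (t i - row_comb (C i) W) $ j" if "i < m" "j < m" for i j
    using that Wc by (simp add: P_def)
  have off: "poly_deg_le (P $$ (i,j)) (int (\<delta> j) - 1)" if "i < m" "j < m" "i \<noteq> j" for i j
    using C(2)[of j i] that Pij[of i j] by (simp add: t_def)
  have diag: "P $$ (i,i) \<noteq> 0 \<and> degree (P $$ (i,i)) = \<delta> i \<and> lead_coeff (P $$ (i,i)) = 1" if i: "i < m" for i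
  proof -
    have "P $$ (i,i) = monom 1 (\<delta> i) + - ((t i - row_comb (C i) W) $ i)"
      using Pij[OF i i] i by (simp add: t_def)
    moreover have "poly_deg_le (- ((t i - row_comb (C i) W) $ i)) (int (degree (monom (1::'b) (\<delta> i))) - 1)"
      using C(2)[OF i, of i] by (simp add: degree_monom_eq)
    note add_lower_degree[OF _ this]
    ultimately show ?thesis by (simp add: degree_monom_eq)
  qed
  have rows: "is_interpolant E J (row P i)" if "i < m" for i
    unfolding rowP[OF that] using ib Wc C(1) by (intro is_interpolant_row_comb[OF J E]) (auto simp: is_interp_basis_iff m_def)
  have piv: "is_pivot s (row P i) i" if i: "i < m" for i
  proof -
    have "is_pivot s (row_comb (C i) W) i"
    proof (rule is_pivot_row_comb_if_off_diag_low[OF Wc W C(1) i])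
      show "row_comb (C i) W $ i \<noteq> 0" using diag[OF i] i Wc by (simp add: P_def)
      show "poly_deg_le (row_comb (C i) W $ k) (int (degree (W $$ (k,k))) - 1)" if "k < m" "k \<noteq> i" for k
        using off[OF i that(1)] that i Wc by (simp add: P_def \<delta>_def)
    qed
    then show ?thesis using rowP[OF i] by simp
  qed
  have D: "diag_weak_popov s P" using piv Pc by (simp add: diag_weak_popov_def)
  have monicP: "\<And>i. i < m \<Longrightarrow> lead_coeff (P $$ (i,i)) = 1" using diag by blast
  have "s_popov s P"
    using s_popov_if_diag_weak_popov[OF Pc D _ monicP] off diag s by (simp add: m_def)
  moreover have "is_interp_basis E J P"
    using interp_basis_if_same_diag_degrees[OF J E ib W] Pc D monicP rows diag by (simp add: m_def \<delta>_def)
  moreover have "diag_degrees P = diag_degrees W"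
    using Pc Wc diag by (auto simp: diag_degrees_def \<delta>_def)
  ultimately show ?thesis using that by blast
qed

lemma minimal_degree_eq_diag_degrees:
  fixes W :: "'b::field poly mat"
  assumes J: "J \<in> carrier_mat n n" and E: "dim_col E = n"
    and ib: "is_interp_basis E J W" and W: "diag_weak_popov s W"
    and monic: "\<And>i. i < dim_row E \<Longrightarrow> lead_coeff (W $$ (i,i)) = 1"
    and s: "dim_vec s = dim_row E"
  shows "minimal_degree s E J = diag_degrees W"
proof -
  obtain P where P: "is_interp_basis E J P" "s_popov s P" "diag_degrees P = diag_degrees W"
    using s_popov_interp_basis_exists[OF J E ib W monic s] .
  have "popov_interp_basis s E J = P"
    unfolding popov_interp_basis_def
    using P s_popov_interp_basis_unique[OF J E] by (intro the_equality) blast+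
  then show ?thesis using P(3) by (simp add: minimal_degree_def)
qed

section \<open>Products of matrices with diagonal pivots\<close>

text \<open>Shifting by the diagonal degrees \<open>\<delta>\<close> of \<open>P\<^sub>1\<close> makes the \<open>(s + \<delta>)\<close>-pivots of \<open>P\<^sub>2\<close> the
  indices predicted by the predictable degree property of \<open>P\<^sub>1\<close>.\<close>

lemma diag_weak_popov_mult:
  fixes P1 P2 :: "'b::idom poly mat"
  assumes P1: "P1 \<in> carrier_mat m m" "diag_weak_popov s P1"
    and P2: "P2 \<in> carrier_mat m m" "diag_weak_popov (s + diag_degrees P1) P2"
  shows "diag_weak_popov s (P2 * P1)"
    and "\<And>i. i < m \<Longrightarrow> degree ((P2 * P1) $$ (i,i)) = degree (P2 $$ (i,i)) + degree (P1 $$ (i,i))"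
    and "\<And>i. i < m \<Longrightarrow> lead_coeff ((P2 * P1) $$ (i,i)) = lead_coeff (P2 $$ (i,i)) * lead_coeff (P1 $$ (i,i))"
proof -
  have shift: "(s + diag_degrees P1) $ l = s $ l + int (degree (P1 $$ (l,l)))" if "l < m" for l
    using that P1(1) by (simp add: diag_degrees_def)
  have each: "is_pivot s (row (P2 * P1) i) i
      \<and> degree ((P2 * P1) $$ (i,i)) = degree (P2 $$ (i,i)) + degree (P1 $$ (i,i))
      \<and> lead_coeff ((P2 * P1) $$ (i,i)) = lead_coeff (P2 $$ (i,i)) * lead_coeff (P1 $$ (i,i))"
    if i: "i < m" for i
  proof -
    have max: "int (degree (row P2 i $ l)) + int (degree (P1 $$ (l,l))) + s $ l
        \<le> int (degree (row P2 i $ i)) + int (degree (P1 $$ (i,i))) + s $ i"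
      if "l < m" "row P2 i $ l \<noteq> 0" for l
      using diag_weak_popovD(3)[OF P2(2), of i l] that i P2(1) shift[OF that(1)] shift[OF i] by simp
    have last: "int (degree (row P2 i $ l)) + int (degree (P1 $$ (l,l))) + s $ l
        < int (degree (row P2 i $ i)) + int (degree (P1 $$ (i,i))) + s $ i"
      if "l < m" "i < l" "row P2 i $ l \<noteq> 0" for l
      using diag_weak_popovD(4)[OF P2(2), of i l] that i P2(1) shift[OF that(1)] shift[OF i] by simp
    have "row P2 i $ i \<noteq> 0" using diag_weak_popovD(2)[OF P2(2), of i] i P2(1) by simp
    note pdp = predictable_degree_at[OF P1(1,2) _ i this max last]
    have "(P2 * P1) $$ (i,i) = row_comb (row P2 i) P1 $ i"
      using arg_cong[OF row_mult_eq_row_comb[OF P2(1) P1(1) i], of "\<lambda>v. v $ i"] i P1(1) P2(1) by simp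
    then show ?thesis
      using pdp row_mult_eq_row_comb[OF P2(1) P1(1) i] i P2(1) by simp
  qed
  then show "diag_weak_popov s (P2 * P1)" using P2(1) by (simp add: diag_weak_popov_def)
  show "\<And>i. i < m \<Longrightarrow> degree ((P2 * P1) $$ (i,i)) = degree (P2 $$ (i,i)) + degree (P1 $$ (i,i))"
    and "\<And>i. i < m \<Longrightarrow> lead_coeff ((P2 * P1) $$ (i,i)) = lead_coeff (P2 $$ (i,i)) * lead_coeff (P1 $$ (i,i))"
    using each by blast+
qed

theorem mainTheorem6:
  fixes E J :: "'a::field mat" and s :: "int vec" and P1 P2 :: "'a poly mat"
    and m \<sigma> :: nat
  defines "h1 \<equiv> (\<sigma> + 1) div 2" and "h2 \<equiv> \<sigma> div 2"
  defines "E1 \<equiv> mat m h1 (\<lambda>(i,j). E $$ (i,j))"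
    and "J1 \<equiv> mat h1 h1 (\<lambda>(i,j). J $$ (i,j))"
    and "J2 \<equiv> mat h2 h2 (\<lambda>(i,j). J $$ (h1 + i, h1 + j))"
  defines "\<delta>1 \<equiv> diag_degrees P1"
  defines "E2 \<equiv> mat m h2 (\<lambda>(i,j). act_mat P1 E J $$ (i, h1 + j))"
  defines "\<delta>2 \<equiv> diag_degrees P2"
  assumes "E \<in> carrier_mat m \<sigma>" and "\<sigma> \<ge> 2"
    and "J \<in> carrier_mat \<sigma> \<sigma>" and "upper_triangular J"
    and "dim_vec s = m"
    and "is_interp_basis E1 J1 P1" and "s_popov s P1"
    and "is_interp_basis E2 J2 P2" and "s_popov (s + \<delta>1) P2"
  shows "is_interp_basis E J (P2 * P1) \<and> s_reduced s (P2 * P1)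
         \<and> minimal_degree s E J = \<delta>1 + \<delta>2"
proof -
  have split: "h1 + h2 = \<sigma>" by (simp add: h1_def h2_def)
  have E: "dim_row E = m" "dim_col E = \<sigma>" using \<open>E \<in> carrier_mat m \<sigma>\<close> by auto
  have P1: "P1 \<in> carrier_mat m m" and P2: "P2 \<in> carrier_mat m m"
    using \<open>is_interp_basis E1 J1 P1\<close> \<open>is_interp_basis E2 J2 P2\<close>
    by (auto simp: is_interp_basis_iff E1_def E2_def)
  have blocks: "E1 = left_cols h1 E" "J1 = lead_block h1 J" "J2 = trail_block h1 h2 J"
    "E2 = right_cols h1 h2 (act_mat P1 E J)"
    using E P1 by (auto simp: E1_def J1_def J2_def E2_def left_cols_def lead_block_def trail_block_def
        right_cols_def)
  have basis: "is_interp_basis E J (P2 * P1)"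
    using interp_basis_mult[OF \<open>J \<in> carrier_mat \<sigma> \<sigma>\<close> \<open>upper_triangular J\<close> split E(2)]
      \<open>is_interp_basis E1 J1 P1\<close> \<open>is_interp_basis E2 J2 P2\<close> unfolding blocks .
  note popov1 = s_popovD[OF \<open>s_popov s P1\<close> P1]
    and popov2 = s_popovD[OF \<open>s_popov (s + \<delta>1) P2\<close> P2]
  note product = diag_weak_popov_mult[OF P1 popov1(3) P2 popov2(3)[unfolded \<delta>1_def]]
  have monic: "\<And>i. i < dim_row E \<Longrightarrow> lead_coeff ((P2 * P1) $$ (i,i)) = 1"
    using product(3) popov1(4) popov2(4) E by simp
  have "minimal_degree s E J = diag_degrees (P2 * P1)"
    using minimal_degree_eq_diag_degrees[OF \<open>J \<in> carrier_mat \<sigma> \<sigma>\<close> E(2) basis product(1) monic]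
      \<open>dim_vec s = m\<close> E by simp
  also have "\<dots> = \<delta>1 + \<delta>2"
    using product(2) P1 P2 by (auto simp: \<delta>1_def \<delta>2_def diag_degrees_def)
  finally show ?thesis
    using basis s_reduced_if_diag_weak_popov[OF _ product(1) \<open>dim_vec s = m\<close>] P1 P2 by auto
qed
end
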